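(* Let $T$ be a ranked monad, $L$ a locale and $f\colon L\to\mathrm{LB}_0T$ a locale map. The pullback $L\times_{\mathrm{LB}_0T}\mathrm{LB}_1T$ of $f$ along the source map $\sigma\colon\mathrm{LB}_1T\to\mathrm{LB}_0T$ has frame of opens isomorphic to the pointwise-ordered poset of functions $h\colon T1\to\mathcal{O}(L)$ such that for all $m_1,m_2\in T1$ and every complemented open $b$ of $\mathrm{LB}_0T$, $m_1\sim_bm_2$ implies $h(m_1)\wedge f^{-1}(b)=h(m_2)\wedge f^{-1}(b)$.
   Context: Monads on $\mathbf{Set}$: sets $TA$, $\mathrm{return}$, $\mathbin{\gg\!=}\colon TA\times(TB)^A\to TB$ with monad laws; $t\gg s:=t\mathbin{\gg\!=}\lambda a.s$; ranked of rank $\kappa$: every $t\in TA$ is $t'\mathbin{\gg\!=}\lambda i.\mathrm{return}\,f(i)$ with $t'\in TI$, $|I|<\kappa$. $1=\{*\}$, $2=\{0,1\}$. Locales: opposite of frames, $\mathcal{O}(L)$ the frame, $f^{-1}$ the frame map of $f$. $\mathrm{LB}_0T$: frame presented by generators $[b]$ ($b\in T2$) with relations $[t\mapsto a]\wedge[t\mapsto a']=\bot$ ($a\ne a'$), $[t\gg\mathrm{return}\,a\mapsto a]=\top$, $[t\mathbin{\gg\!=}u\mapsto b]=\bigvee_a[t\mapsto a]\wedge[t\gg u(a)\mapsto b]$, $[t\mapsto a]:=[t\mathbin{\gg\!=}\lambda a'.\mathrm{return}(\delta_a(a'))]$. Trace equivalence: $[\![m\sim_1m']\!]=\bigvee\{[t\mapsto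 a]:|A|\le\kappa,t\in TA,u,u'\colon A\to T1,u(a)=u'(a),m=t\mathbin{\gg\!=}u,m'=t\mathbin{\gg\!=}u'\}$; $[\![m\sim m']\!]$ is the join over $k\ge1$ and chains $m=m_1,\ldots,m_k=m'$ of $\bigwedge_{i<k}[\![m_i\sim_1m_{i+1}]\!]$ (just $[\![m\sim_1m']\!]$ for $k=1$); $m\sim_bm'$ iff $b\le[\![m\sim m']\!]$. $\mathrm{LB}_1T$ has frame the pointwise-ordered functions $w\colon T1\to\mathcal{O}(\mathrm{LB}_0T)$ with $b\wedge w(m_1)=b\wedge w(m_2)$ whenever $b$ complemented and $m_1\sim_bm_2$; the source map $\sigma\colon\mathrm{LB}_1T\to\mathrm{LB}_0T$ is $\sigma^{-1}(u)=\mathrm{const}_u$. *)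

theory Defs
  imports Main
begin

definition is_lub :: "'a set \<Rightarrow> ('a \<Rightarrow> 'a \<Rightarrow> bool) \<Rightarrow> 'a set \<Rightarrow> 'a \<Rightarrow> bool" where
  "is_lub X le S x \<longleftrightarrow> x \<in> X \<and> (\<forall>s\<in>S. le s x) \<and> (\<forall>y\<in>X. (\<forall>s\<in>S. le s y) \<longrightarrow> le x y)"

definition is_glb :: "'a set \<Rightarrow> ('a \<Rightarrow> 'a \<Rightarrow> bool) \<Rightarrow> 'a set \<Rightarrow> 'a \<Rightarrow> bool" where
  "is_glb X le S x \<longleftrightarrow> x \<in> X \<and> (\<forall>s\<in>S. le x s) \<and> (\<forall>y\<in>X. (\<forall>s\<in>S. le y s) \<longrightarrow> le y x)"

definition lub :: "'a set \<Rightarrow> ('a \<Rightarrow> 'a \<Rightarrow> bool) \<Rightarrow> 'a set \<Rightarrow> 'a" where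
  "lub X le S = (THE x. is_lub X le S x)"

definition glb :: "'a set \<Rightarrow> ('a \<Rightarrow> 'a \<Rightarrow> bool) \<Rightarrow> 'a set \<Rightarrow> 'a" where
  "glb X le S = (THE x. is_glb X le S x)"

definition meet2 :: "'a set \<Rightarrow> ('a \<Rightarrow> 'a \<Rightarrow> bool) \<Rightarrow> 'a \<Rightarrow> 'a \<Rightarrow> 'a" where
  "meet2 X le a b = glb X le {a, b}"

definition join2 :: "'a set \<Rightarrow> ('a \<Rightarrow> 'a \<Rightarrow> bool) \<Rightarrow> 'a \<Rightarrow> 'a \<Rightarrow> 'a" where
  "join2 X le a b = lub X le {a, b}"

definition ftop :: "'a set \<Rightarrow> ('a \<Rightarrow> 'a \<Rightarrow> bool) \<Rightarrow> 'a" where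
  "ftop X le = glb X le {}"

definition fbot :: "'a set \<Rightarrow> ('a \<Rightarrow> 'a \<Rightarrow> bool) \<Rightarrow> 'a" where
  "fbot X le = lub X le {}"

definition is_frame :: "'a set \<Rightarrow> ('a \<Rightarrow> 'a \<Rightarrow> bool) \<Rightarrow> bool" where
  "is_frame X le \<longleftrightarrow>
     (\<forall>x\<in>X. le x x) \<and>
     (\<forall>x\<in>X. \<forall>y\<in>X. le x y \<and> le y x \<longrightarrow> x = y) \<and>
     (\<forall>x\<in>X. \<forall>y\<in>X. \<forall>z\<in>X. le x y \<and> le y z \<longrightarrow> le x z) \<and>
     (\<forall>S. S \<subseteq> X \<longrightarrow> (\<exists>x. is_lub X le S x)) \<and>
     (\<forall>a\<in>X. \<forall>S. S \<subseteq> X \<longrightarrow> meet2 X le a (lub X le S) = lub X le ((\<lambda>s. meet2 X le a s) ` S))"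

definition frame_hom :: "'a set \<Rightarrow> ('a \<Rightarrow> 'a \<Rightarrow> bool) \<Rightarrow> 'b set \<Rightarrow> ('b \<Rightarrow> 'b \<Rightarrow> bool) \<Rightarrow> ('a \<Rightarrow> 'b) \<Rightarrow> bool" where
  "frame_hom X le Y le' \<phi> \<longleftrightarrow>
     (\<forall>x\<in>X. \<phi> x \<in> Y) \<and>
     \<phi> (ftop X le) = ftop Y le' \<and>
     (\<forall>a\<in>X. \<forall>b\<in>X. \<phi> (meet2 X le a b) = meet2 Y le' (\<phi> a) (\<phi> b)) \<and>
     (\<forall>S. S \<subseteq> X \<longrightarrow> \<phi> (lub X le S) = lub Y le' (\<phi> ` S))"

definition complemented :: "'a set \<Rightarrow> ('a \<Rightarrow> 'a \<Rightarrow> bool) \<Rightarrow> 'a \<Rightarrow> bool" where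
  "complemented X le b \<longleftrightarrow> b \<in> X \<and>
     (\<exists>c\<in>X. meet2 X le b c = fbot X le \<and> join2 X le b c = ftop X le)"

section \<open>Pushouts of frames (= pullbacks of locales)\<close>

definition frame_cocone ::
  "'a set \<Rightarrow> ('a \<Rightarrow> 'a \<Rightarrow> bool) \<Rightarrow> 'b set \<Rightarrow> ('b \<Rightarrow> 'b \<Rightarrow> bool) \<Rightarrow> 'c set \<Rightarrow> ('c \<Rightarrow> 'c \<Rightarrow> bool)
   \<Rightarrow> ('a \<Rightarrow> 'b) \<Rightarrow> ('a \<Rightarrow> 'c) \<Rightarrow> 'p set \<Rightarrow> ('p \<Rightarrow> 'p \<Rightarrow> bool) \<Rightarrow> ('b \<Rightarrow> 'p) \<Rightarrow> ('c \<Rightarrow> 'p) \<Rightarrow> bool" where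
  "frame_cocone A leA B leB C leC g1 g2 P leP i j \<longleftrightarrow>
     is_frame P leP \<and> frame_hom B leB P leP i \<and> frame_hom C leC P leP j \<and>
     (\<forall>x\<in>A. i (g1 x) = j (g2 x))"

definition frame_mediates ::
  "'b set \<Rightarrow> 'c set \<Rightarrow> 'p set \<Rightarrow> ('p \<Rightarrow> 'p \<Rightarrow> bool) \<Rightarrow> ('b \<Rightarrow> 'p) \<Rightarrow> ('c \<Rightarrow> 'p)
   \<Rightarrow> 'q set \<Rightarrow> ('q \<Rightarrow> 'q \<Rightarrow> bool) \<Rightarrow> ('b \<Rightarrow> 'q) \<Rightarrow> ('c \<Rightarrow> 'q) \<Rightarrow> bool" where
  "frame_mediates B C P leP i j Q leQ p q \<longleftrightarrow>
     (\<exists>r. frame_hom P leP Q leQ r \<and> (\<forall>y\<in>B. r (i y) = p y) \<and> (\<forall>z\<in>C. r (j z) = q z)) \<and>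
     (\<forall>r r'. frame_hom P leP Q leQ r \<and> (\<forall>y\<in>B. r (i y) = p y) \<and> (\<forall>z\<in>C. r (j z) = q z) \<and>
             frame_hom P leP Q leQ r' \<and> (\<forall>y\<in>B. r' (i y) = p y) \<and> (\<forall>z\<in>C. r' (j z) = q z)
             \<longrightarrow> (\<forall>x\<in>P. r x = r' x))"

definition fin_subsets :: "'g set \<Rightarrow> 'g set set" where
  "fin_subsets G = {S. S \<subseteq> G \<and> finite S}"

text \<open>A relation (S, C) stands for  /\S <= \/_{S' in C} /\S'.  The presented frame is the
  frame of downsets of the free meet-semilattice on G (finite subsets, ordered by
  reverse inclusion) that are saturated for the meet-stable closure of the relations.\<close>
definition pres_carrier :: "'g set \<Rightarrow> ('g set \<times> 'g set set) set \<Rightarrow> 'g set set set" where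
  "pres_carrier G R = {D. D \<subseteq> fin_subsets G \<and>
      (\<forall>S\<in>D. \<forall>S'\<in>fin_subsets G. S \<subseteq> S' \<longrightarrow> S' \<in> D) \<and>
      (\<forall>(S, C)\<in>R. \<forall>U\<in>fin_subsets G. (\<forall>S'\<in>C. U \<union> S' \<in> D) \<longrightarrow> U \<union> S \<in> D)}"

definition pres_gen :: "'g set \<Rightarrow> ('g set \<times> 'g set set) set \<Rightarrow> 'g \<Rightarrow> 'g set set" where
  "pres_gen G R g = \<Inter> {D \<in> pres_carrier G R. {g} \<in> D}"

section \<open>Monads on Set (restricted to subsets of a universe type 'i)\<close>

record ('i, 't) set_monad =
  Tm :: "'i set \<Rightarrow> 't set"
  ret :: "'i set \<Rightarrow> 'i \<Rightarrow> 't"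
  bnd :: "'i set \<Rightarrow> 'i set \<Rightarrow> 't \<Rightarrow> ('i \<Rightarrow> 't) \<Rightarrow> 't"

definition is_set_monad :: "('i, 't) set_monad \<Rightarrow> bool" where
  "is_set_monad M \<longleftrightarrow>
     (\<forall>A. \<forall>a\<in>A. ret M A a \<in> Tm M A) \<and>
     (\<forall>A B t u. t \<in> Tm M A \<and> (\<forall>a\<in>A. u a \<in> Tm M B) \<longrightarrow> bnd M A B t u \<in> Tm M B) \<and>
     (\<forall>A B t u u'. t \<in> Tm M A \<and> (\<forall>a\<in>A. u a = u' a) \<longrightarrow> bnd M A B t u = bnd M A B t u') \<and>
     (\<forall>A B a u. a \<in> A \<and> (\<forall>x\<in>A. u x \<in> Tm M B) \<longrightarrow> bnd M A B (ret M A a) u = u a) \<and>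
     (\<forall>A t. t \<in> Tm M A \<longrightarrow> bnd M A A t (ret M A) = t) \<and>
     (\<forall>A B C t u v. t \<in> Tm M A \<and> (\<forall>a\<in>A. u a \<in> Tm M B) \<and> (\<forall>b\<in>B. v b \<in> Tm M C) \<longrightarrow>
        bnd M B C (bnd M A B t u) v = bnd M A C t (\<lambda>a. bnd M B C (u a) v))"

text \<open>Ranked of rank kappa = |K|.\<close>
definition ranked :: "('i, 't) set_monad \<Rightarrow> 'k set \<Rightarrow> bool" where
  "ranked M K \<longleftrightarrow> (\<forall>A. \<forall>t\<in>Tm M A. \<exists>I t' f. (card_of I, card_of K) \<in> ordLess \<and> t' \<in> Tm M I \<and>
       (\<forall>i\<in>I. f i \<in> A) \<and> t = bnd M I A t' (\<lambda>i. ret M A (f i)))"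

text \<open>Here 1 = {c0} and 2 = {c0, c1} with 0 = c0 and 1 = c1.\<close>
definition mapsto :: "('i, 't) set_monad \<Rightarrow> 'i \<Rightarrow> 'i \<Rightarrow> 'i set \<Rightarrow> 't \<Rightarrow> 'i \<Rightarrow> 't" where
  "mapsto M c0 c1 A t a = bnd M A {c0, c1} t (\<lambda>a'. ret M {c0, c1} (if a' = a then c1 else c0))"

definition lb0_rels :: "('i, 't) set_monad \<Rightarrow> 'i \<Rightarrow> 'i \<Rightarrow> ('t set \<times> 't set set) set" where
  "lb0_rels M c0 c1 =
     {({mapsto M c0 c1 A t a, mapsto M c0 c1 A t a'}, {}) | A t a a'.
        t \<in> Tm M A \<and> a \<in> A \<and> a' \<in> A \<and> a \<noteq> a'}
   \<union> {({}, {{mapsto M c0 c1 A (bnd M A A t (\<lambda>_. ret M A a)) a}}) | A t a.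
        t \<in> Tm M A \<and> a \<in> A}
   \<union> {({mapsto M c0 c1 B (bnd M A B t u) b},
        {{mapsto M c0 c1 A t a, mapsto M c0 c1 B (bnd M A B t (\<lambda>_. u a)) b} | a. a \<in> A}) | A B t u b.
        t \<in> Tm M A \<and> (\<forall>a\<in>A. u a \<in> Tm M B) \<and> b \<in> B}
   \<union> {({mapsto M c0 c1 A t a, mapsto M c0 c1 B (bnd M A B t (\<lambda>_. u a)) b},
        {{mapsto M c0 c1 B (bnd M A B t u) b}}) | A B t u a b.
        t \<in> Tm M A \<and> (\<forall>x\<in>A. u x \<in> Tm M B) \<and> a \<in> A \<and> b \<in> B}"

text \<open>The frame O(LB_0 T), ordered by inclusion.\<close>
definition LB0 :: "('i, 't) set_monad \<Rightarrow> 'i \<Rightarrow> 'i \<Rightarrow> 't set set set" where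
  "LB0 M c0 c1 = pres_carrier (Tm M {c0, c1}) (lb0_rels M c0 c1)"

definition lb0_gen :: "('i, 't) set_monad \<Rightarrow> 'i \<Rightarrow> 'i \<Rightarrow> 't \<Rightarrow> 't set set" where
  "lb0_gen M c0 c1 b = pres_gen (Tm M {c0, c1}) (lb0_rels M c0 c1) b"

definition trace1 :: "('i, 't) set_monad \<Rightarrow> 'i \<Rightarrow> 'i \<Rightarrow> 'k set \<Rightarrow> 't \<Rightarrow> 't \<Rightarrow> 't set set" where
  "trace1 M c0 c1 K m m' = lub (LB0 M c0 c1) (\<subseteq>)
     {lb0_gen M c0 c1 (mapsto M c0 c1 A t a) | A t u u' a.
        (card_of A, card_of K) \<in> ordLeq \<and> t \<in> Tm M A \<and>
        (\<forall>x\<in>A. u x \<in> Tm M {c0}) \<and> (\<forall>x\<in>A. u' x \<in> Tm M {c0}) \<and>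
        a \<in> A \<and> u a = u' a \<and> m = bnd M A {c0} t u \<and> m' = bnd M A {c0} t u'}"

definition trace :: "('i, 't) set_monad \<Rightarrow> 'i \<Rightarrow> 'i \<Rightarrow> 'k set \<Rightarrow> 't \<Rightarrow> 't \<Rightarrow> 't set set" where
  "trace M c0 c1 K m m' = lub (LB0 M c0 c1) (\<subseteq>)
     {glb (LB0 M c0 c1) (\<subseteq>) {trace1 M c0 c1 K (ms i) (ms (Suc i)) | i. i < k} | k ms.
        1 \<le> k \<and> ms 0 = m \<and> ms k = m' \<and> (\<forall>i\<le>k. ms i \<in> Tm M {c0})}"

definition trace_equiv :: "('i, 't) set_monad \<Rightarrow> 'i \<Rightarrow> 'i \<Rightarrow> 'k set \<Rightarrow> 't set set \<Rightarrow> 't \<Rightarrow> 't \<Rightarrow> bool" where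
  "trace_equiv M c0 c1 K b m m' \<longleftrightarrow> b \<subseteq> trace M c0 c1 K m m'"

definition LB1 :: "('i, 't) set_monad \<Rightarrow> 'i \<Rightarrow> 'i \<Rightarrow> 'k set \<Rightarrow> ('t \<Rightarrow> 't set set) set" where
  "LB1 M c0 c1 K = {w. (\<forall>m\<in>Tm M {c0}. w m \<in> LB0 M c0 c1) \<and> (\<forall>m. m \<notin> Tm M {c0} \<longrightarrow> w m = undefined) \<and>
     (\<forall>b m1 m2. complemented (LB0 M c0 c1) (\<subseteq>) b \<and> m1 \<in> Tm M {c0} \<and> m2 \<in> Tm M {c0} \<and>
        trace_equiv M c0 c1 K b m1 m2 \<longrightarrow>
        meet2 (LB0 M c0 c1) (\<subseteq>) b (w m1) = meet2 (LB0 M c0 c1) (\<subseteq>) b (w m2))}"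

definition LB1_le :: "('i, 't) set_monad \<Rightarrow> 'i \<Rightarrow> ('t \<Rightarrow> 't set set) \<Rightarrow> ('t \<Rightarrow> 't set set) \<Rightarrow> bool" where
  "LB1_le M c0 w w' \<longleftrightarrow> (\<forall>m\<in>Tm M {c0}. w m \<subseteq> w' m)"

definition sigma_inv :: "('i, 't) set_monad \<Rightarrow> 'i \<Rightarrow> 't set set \<Rightarrow> ('t \<Rightarrow> 't set set)" where
  "sigma_inv M c0 u = (\<lambda>m. if m \<in> Tm M {c0} then u else undefined)"

definition pb_carrier :: "('i, 't) set_monad \<Rightarrow> 'i \<Rightarrow> 'i \<Rightarrow> 'k set \<Rightarrow> 'l set \<Rightarrow> ('l \<Rightarrow> 'l \<Rightarrow> bool)
    \<Rightarrow> ('t set set \<Rightarrow> 'l) \<Rightarrow> ('t \<Rightarrow> 'l) set" where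
  "pb_carrier M c0 c1 K OL leL finv = {h. (\<forall>m\<in>Tm M {c0}. h m \<in> OL) \<and> (\<forall>m. m \<notin> Tm M {c0} \<longrightarrow> h m = undefined) \<and>
     (\<forall>m1\<in>Tm M {c0}. \<forall>m2\<in>Tm M {c0}. \<forall>b. complemented (LB0 M c0 c1) (\<subseteq>) b \<and> trace_equiv M c0 c1 K b m1 m2 \<longrightarrow>
        meet2 OL leL (h m1) (finv b) = meet2 OL leL (h m2) (finv b))}"

definition pb_le :: "('i, 't) set_monad \<Rightarrow> 'i \<Rightarrow> ('l \<Rightarrow> 'l \<Rightarrow> bool) \<Rightarrow> ('t \<Rightarrow> 'l) \<Rightarrow> ('t \<Rightarrow> 'l) \<Rightarrow> bool" where
  "pb_le M c0 leL h h' \<longleftrightarrow> (\<forall>m\<in>Tm M {c0}. leL (h m) (h' m))"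

definition pb_inl :: "('i, 't) set_monad \<Rightarrow> 'i \<Rightarrow> 'l \<Rightarrow> ('t \<Rightarrow> 'l)" where
  "pb_inl M c0 x = (\<lambda>m. if m \<in> Tm M {c0} then x else undefined)"

definition pb_inr :: "('i, 't) set_monad \<Rightarrow> 'i \<Rightarrow> ('t set set \<Rightarrow> 'l) \<Rightarrow> ('t \<Rightarrow> 't set set) \<Rightarrow> ('t \<Rightarrow> 'l)" where
  "pb_inr M c0 finv w = (\<lambda>m. if m \<in> Tm M {c0} then finv (w m) else undefined)"

end

theory Submission
  imports Defs
begin

text \<open>The trace [[m \<sim> m']] is reflexive, symmetric and transitive, and it is a join of
  complemented opens of LB_0 T. For h in the candidate frame this gives
  h m' \<sqinter> f\<inverse>[[m \<sim> m']] \<le> h m, so h is the join over m0 of inl (h m0) \<sqinter> inr (trace_to m0),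
  where trace_to m0 = (\<lambda>m. [[m \<sim> m0]]) is an open of LB_1 T; likewise every open w of LB_1 T
  is the join of \<sigma>\<inverse>(w m0) \<sqinter> trace_to m0. Given a cocone (p, q) into a frame Q, the
  mediating map is therefore forced to be h \<mapsto> \<Squnion>m0. p (h m0) \<sqinter> q (trace_to m0). It
  preserves binary meets because trace_to m0 \<sqinter> trace_to m1 \<le> \<sigma>\<inverse>[[m0 \<sim> m1]] and the
  cocone square turns q \<circ> \<sigma>\<inverse> into p \<circ> f\<inverse>.\<close>

lemma lub_eq_if_antisym:
  assumes "\<And>x y. x \<in> X \<Longrightarrow> y \<in> X \<Longrightarrow> le x y \<Longrightarrow> le y x \<Longrightarrow> x = y" and "is_lub X le S x"
  shows "lub X le S = x"
  unfolding lub_def by (rule the_equality) (use assms in \<open>auto simp: is_lub_def\<close>)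

lemma glb_eq_if_antisym:
  assumes "\<And>x y. x \<in> X \<Longrightarrow> y \<in> X \<Longrightarrow> le x y \<Longrightarrow> le y x \<Longrightarrow> x = y" and "is_glb X le S x"
  shows "glb X le S = x"
  unfolding glb_def by (rule the_equality) (use assms in \<open>auto simp: is_glb_def\<close>)

lemma lub_subset_eq: "is_lub X (\<subseteq>) S x \<Longrightarrow> lub X (\<subseteq>) S = x"
  by (rule lub_eq_if_antisym) auto

lemma glb_subset_eq: "is_glb X (\<subseteq>) S x \<Longrightarrow> glb X (\<subseteq>) S = x"
  by (rule glb_eq_if_antisym) auto

locale frame =
  fixes X :: "'a set" and le :: "'a \<Rightarrow> 'a \<Rightarrow> bool"
  assumes is_frame: "is_frame X le"
begin

lemma refl: "x \<in> X \<Longrightarrow> le x x"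
  using is_frame unfolding is_frame_def by (elim conjE) blast

lemma antisym: "x \<in> X \<Longrightarrow> y \<in> X \<Longrightarrow> le x y \<Longrightarrow> le y x \<Longrightarrow> x = y"
  using is_frame unfolding is_frame_def by (elim conjE) blast

lemma trans: "x \<in> X \<Longrightarrow> y \<in> X \<Longrightarrow> z \<in> X \<Longrightarrow> le x y \<Longrightarrow> le y z \<Longrightarrow> le x z"
  using is_frame unfolding is_frame_def by (elim conjE) blast

lemma lub_exists: "S \<subseteq> X \<Longrightarrow> \<exists>x. is_lub X le S x"
  using is_frame unfolding is_frame_def by (elim conjE) blast

lemma meet_lub_distrib:
  "a \<in> X \<Longrightarrow> S \<subseteq> X \<Longrightarrow> meet2 X le a (lub X le S) = lub X le ((\<lambda>s. meet2 X le a s) ` S)"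
  using is_frame unfolding is_frame_def by (elim conjE) blast

lemma lub_eq: "is_lub X le S x \<Longrightarrow> lub X le S = x"
  by (rule lub_eq_if_antisym[OF antisym])

lemma is_lub_lub: "S \<subseteq> X \<Longrightarrow> is_lub X le S (lub X le S)"
  using lub_exists lub_eq by metis

lemma lub_closed: "S \<subseteq> X \<Longrightarrow> lub X le S \<in> X"
  using is_lub_lub unfolding is_lub_def by blast

lemma lub_upper: "S \<subseteq> X \<Longrightarrow> s \<in> S \<Longrightarrow> le s (lub X le S)"
  using is_lub_lub unfolding is_lub_def by blast

lemma lub_least: "S \<subseteq> X \<Longrightarrow> y \<in> X \<Longrightarrow> (\<And>s. s \<in> S \<Longrightarrow> le s y) \<Longrightarrow> le (lub X le S) y"
  using is_lub_lub unfolding is_lub_def by blast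

lemma lub_eqI:
  "S \<subseteq> X \<Longrightarrow> x \<in> X \<Longrightarrow> (\<And>s. s \<in> S \<Longrightarrow> le s x) \<Longrightarrow>
    (\<And>y. y \<in> X \<Longrightarrow> (\<And>s. s \<in> S \<Longrightarrow> le s y) \<Longrightarrow> le x y) \<Longrightarrow> lub X le S = x"
  by (rule lub_eq) (auto simp: is_lub_def)

lemma lub_mono: "S \<subseteq> T \<Longrightarrow> T \<subseteq> X \<Longrightarrow> le (lub X le S) (lub X le T)"
  by (rule lub_least) (auto intro: lub_closed lub_upper)

lemma lub_UN:
  assumes "\<And>i. i \<in> I \<Longrightarrow> A i \<subseteq> X"
  shows "lub X le ((\<lambda>i. lub X le (A i)) ` I) = lub X le (\<Union>i\<in>I. A i)"
proof -
  have U: "(\<Union>i\<in>I. A i) \<subseteq> X" and im: "(\<lambda>i. lub X le (A i)) ` I \<subseteq> X"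
    using assms lub_closed by blast+
  show ?thesis
  proof (rule antisym[OF lub_closed[OF im] lub_closed[OF U]])
    show "le (lub X le ((\<lambda>i. lub X le (A i)) ` I)) (lub X le (\<Union>i\<in>I. A i))"
      using U by (intro lub_least[OF im lub_closed[OF U]]) (auto intro: lub_mono)
    show "le (lub X le (\<Union>i\<in>I. A i)) (lub X le ((\<lambda>i. lub X le (A i)) ` I))"
    proof (rule lub_least[OF U lub_closed[OF im]])
      fix s assume "s \<in> (\<Union>i\<in>I. A i)"
      then obtain i where i: "i \<in> I" and s: "s \<in> A i" by blast
      have "le s (lub X le (A i))" using assms[OF i] s by (rule lub_upper)
      moreover have "le (lub X le (A i)) (lub X le ((\<lambda>i. lub X le (A i)) ` I))"
        using i by (intro lub_upper[OF im]) blast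
      ultimately show "le s (lub X le ((\<lambda>i. lub X le (A i)) ` I))"
        using trans s assms[OF i] lub_closed[OF assms[OF i]] lub_closed[OF im] by blast
    qed
  qed
qed

lemma is_glb_glb: "S \<subseteq> X \<Longrightarrow> is_glb X le S (glb X le S)"
proof -
  assume S: "S \<subseteq> X"
  let ?L = "{y\<in>X. \<forall>s\<in>S. le y s}"
  have glb: "is_glb X le S (lub X le ?L)"
    unfolding is_glb_def using S by (auto intro!: lub_closed lub_least lub_upper)
  have "glb X le S = lub X le ?L" using antisym glb by (rule glb_eq_if_antisym)
  with glb show ?thesis by simp
qed

lemma glb_closed: "S \<subseteq> X \<Longrightarrow> glb X le S \<in> X"
  using is_glb_glb unfolding is_glb_def by blast

lemma glb_lower: "S \<subseteq> X \<Longrightarrow> s \<in> S \<Longrightarrow> le (glb X le S) s"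
  using is_glb_glb unfolding is_glb_def by blast

lemma glb_greatest: "S \<subseteq> X \<Longrightarrow> y \<in> X \<Longrightarrow> (\<And>s. s \<in> S \<Longrightarrow> le y s) \<Longrightarrow> le y (glb X le S)"
  using is_glb_glb unfolding is_glb_def by blast

lemma glb_eq: "is_glb X le S x \<Longrightarrow> glb X le S = x"
  by (rule glb_eq_if_antisym[OF antisym])

lemma meet_closed: "a \<in> X \<Longrightarrow> b \<in> X \<Longrightarrow> meet2 X le a b \<in> X"
  unfolding meet2_def by (rule glb_closed) auto

lemma meet_lower1: "a \<in> X \<Longrightarrow> b \<in> X \<Longrightarrow> le (meet2 X le a b) a"
  unfolding meet2_def by (rule glb_lower) auto

lemma meet_lower2: "a \<in> X \<Longrightarrow> b \<in> X \<Longrightarrow> le (meet2 X le a b) b"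
  unfolding meet2_def by (rule glb_lower) auto

lemma meet_greatest: "a \<in> X \<Longrightarrow> b \<in> X \<Longrightarrow> y \<in> X \<Longrightarrow> le y a \<Longrightarrow> le y b \<Longrightarrow> le y (meet2 X le a b)"
  unfolding meet2_def by (rule glb_greatest) auto

lemma glb_insert:
  assumes "x \<in> X" and "F \<subseteq> X"
  shows "glb X le (insert x F) = meet2 X le x (glb X le F)"
proof (rule glb_eq)
  have "le (meet2 X le x (glb X le F)) f" if f: "f \<in> F" for f
    using assms f glb_closed[OF assms(2)]
    by (intro trans[OF meet_closed _ _ meet_lower2 glb_lower[OF assms(2) f]]) auto
  then show "is_glb X le (insert x F) (meet2 X le x (glb X le F))"
    unfolding is_glb_def using assms
    by (auto intro!: meet_closed glb_closed meet_lower1 meet_greatest glb_greatest)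
qed

lemma meet_commute: "meet2 X le a b = meet2 X le b a"
  unfolding meet2_def by (simp add: insert_commute)

lemma meet_absorb: "a \<in> X \<Longrightarrow> b \<in> X \<Longrightarrow> le a b \<Longrightarrow> meet2 X le a b = a"
  by (rule antisym) (auto intro: meet_closed meet_lower1 meet_greatest refl)

lemma meet_mono:
  assumes "a \<in> X" "b \<in> X" "a' \<in> X" "b' \<in> X" "le a a'" "le b b'"
  shows "le (meet2 X le a b) (meet2 X le a' b')"
proof -
  have "le (meet2 X le a b) a'"
    using assms meet_lower1[of a b] meet_closed[of a b] trans[of _ a a'] by blast
  moreover have "le (meet2 X le a b) b'"
    using assms meet_lower2[of a b] meet_closed[of a b] trans[of _ b b'] by blast
  ultimately show ?thesis using assms by (simp add: meet_greatest meet_closed)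
qed

lemma meet_right_distrib:
  assumes x: "x \<in> X" and y: "y \<in> X" and z: "z \<in> X"
  shows "meet2 X le (meet2 X le x y) z = meet2 X le (meet2 X le x z) (meet2 X le y z)"
proof -
  have xy: "meet2 X le x y \<in> X" and xz: "meet2 X le x z \<in> X" and yz: "meet2 X le y z \<in> X"
    using x y z by (auto intro: meet_closed)
  have "le (meet2 X le (meet2 X le x y) z) (meet2 X le x z)"
    and "le (meet2 X le (meet2 X le x y) z) (meet2 X le y z)"
    using x y z xy by (auto intro!: meet_mono meet_lower1 meet_lower2 refl)
  moreover have "le (meet2 X le (meet2 X le x z) (meet2 X le y z)) (meet2 X le x y)"
    using x y z xz yz by (auto intro!: meet_mono meet_lower1)
  moreover have "le (meet2 X le (meet2 X le x z) (meet2 X le y z)) z"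
    using trans[OF meet_closed[OF xz yz] xz z meet_lower1[OF xz yz] meet_lower2[OF x z]] .
  ultimately show ?thesis
    using x y z xy xz yz by (intro antisym meet_closed) (simp_all add: meet_greatest meet_closed)
qed

lemma lub_meet_distrib:
  "a \<in> X \<Longrightarrow> S \<subseteq> X \<Longrightarrow> meet2 X le (lub X le S) a = lub X le ((\<lambda>s. meet2 X le s a) ` S)"
  using meet_lub_distrib by (simp add: meet_commute)

lemma meet_lub_lub_le:
  assumes S: "S \<subseteq> X" and S': "S' \<subseteq> X" and z: "z \<in> X"
    and le_z: "\<And>s s'. s \<in> S \<Longrightarrow> s' \<in> S' \<Longrightarrow> le (meet2 X le s s') z"
  shows "le (meet2 X le (lub X le S) (lub X le S')) z"
proof -
  have "meet2 X le (lub X le S) (lub X le S') = lub X le ((\<lambda>s'. meet2 X le (lub X le S) s') ` S')"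
    using S S' by (simp add: meet_lub_distrib lub_closed)
  also have "le \<dots> z"
  proof (rule lub_least)
    fix y assume "y \<in> (\<lambda>s'. meet2 X le (lub X le S) s') ` S'"
    then obtain s' where s': "s' \<in> S'" "y = meet2 X le (lub X le S) s'" by auto
    have "y = lub X le ((\<lambda>s. meet2 X le s s') ` S)" using s' S S' by (simp add: lub_meet_distrib subsetD)
    also have "le \<dots> z" using S S' z s' le_z by (intro lub_least) (auto intro: meet_closed)
    finally show "le y z" .
  qed (use S S' z in \<open>auto intro: meet_closed lub_closed\<close>)
  finally show ?thesis .
qed

lemma top_closed: "ftop X le \<in> X"
  unfolding ftop_def by (rule glb_closed) auto

lemma top_greatest: "x \<in> X \<Longrightarrow> le x (ftop X le)"
  unfolding ftop_def by (rule glb_greatest) auto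

lemma bot_closed: "fbot X le \<in> X"
  unfolding fbot_def by (rule lub_closed) auto

lemma bot_least: "x \<in> X \<Longrightarrow> le (fbot X le) x"
  unfolding fbot_def by (rule lub_least) auto

lemma lub_below_bot: "S \<subseteq> {fbot X le} \<Longrightarrow> lub X le S = fbot X le"
  using bot_closed bot_least by (intro lub_eqI) blast+

lemma meet_top: "a \<in> X \<Longrightarrow> meet2 X le a (ftop X le) = a"
  by (simp add: meet_absorb top_greatest top_closed)

lemma join_closed: "a \<in> X \<Longrightarrow> b \<in> X \<Longrightarrow> join2 X le a b \<in> X"
  unfolding join2_def by (rule lub_closed) auto

lemma join_upper1: "a \<in> X \<Longrightarrow> b \<in> X \<Longrightarrow> le a (join2 X le a b)"
  unfolding join2_def by (rule lub_upper) auto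

lemma join_upper2: "a \<in> X \<Longrightarrow> b \<in> X \<Longrightarrow> le b (join2 X le a b)"
  unfolding join2_def by (rule lub_upper) auto

lemma join_least: "a \<in> X \<Longrightarrow> b \<in> X \<Longrightarrow> y \<in> X \<Longrightarrow> le a y \<Longrightarrow> le b y \<Longrightarrow> le (join2 X le a b) y"
  unfolding join2_def by (rule lub_least) auto

lemma meet_join_distrib:
  "a \<in> X \<Longrightarrow> b \<in> X \<Longrightarrow> c \<in> X \<Longrightarrow> meet2 X le a (join2 X le b c) = join2 X le (meet2 X le a b) (meet2 X le a c)"
  unfolding join2_def using meet_lub_distrib[of a "{b, c}"] by simp

lemma join_top_mono:
  assumes "a \<in> X" "a' \<in> X" "c \<in> X" and "join2 X le a a' = ftop X le" and "le a' c"
  shows "join2 X le a c = ftop X le"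
proof -
  have "le a' (join2 X le a c)"
    using assms by (meson join_closed join_upper2 trans)
  then have "le (ftop X le) (join2 X le a c)"
    using assms by (metis join_closed join_least join_upper1)
  then show ?thesis using assms by (intro antisym join_closed top_closed top_greatest)
qed

lemma meet_complements_bot:
  assumes a: "a \<in> X" "a' \<in> X" "meet2 X le a a' = fbot X le"
    and b: "b \<in> X" "b' \<in> X" "meet2 X le b b' = fbot X le"
  shows "meet2 X le (meet2 X le a b) (join2 X le a' b') = fbot X le"
proof -
  let ?m = "meet2 X le a b"
  have m: "?m \<in> X" using a b by (intro meet_closed)
  have "le (meet2 X le ?m a') (fbot X le)"
    using a b meet_mono[OF m a(2) a(1) a(2) meet_lower1 refl] by simp
  moreover have "le (meet2 X le ?m b') (fbot X le)"
    using a b meet_mono[OF m b(2) b(1) b(2) meet_lower2 refl] by simp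
  ultimately have "le (join2 X le (meet2 X le ?m a') (meet2 X le ?m b')) (fbot X le)"
    using a b m by (intro join_least meet_closed bot_closed)
  then show ?thesis
    using a b m
    by (intro antisym) (simp_all add: meet_join_distrib meet_closed join_closed bot_closed bot_least)
qed

lemma join_complements_top:
  assumes a: "a \<in> X" "a' \<in> X" "join2 X le a a' = ftop X le"
    and b: "b \<in> X" "b' \<in> X" "join2 X le b b' = ftop X le"
  shows "join2 X le (meet2 X le a b) (join2 X le a' b') = ftop X le"
proof -
  let ?c = "join2 X le a' b'" and ?m = "meet2 X le a b"
  let ?j = "join2 X le ?m ?c" and ?ac = "join2 X le a ?c"
  have c: "?c \<in> X" and m: "?m \<in> X" and j: "?j \<in> X" and ac: "?ac \<in> X"
    using a b by (auto intro: join_closed meet_closed)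
  have c_j: "le ?c ?j" and m_j: "le ?m ?j" using m c by (auto intro: join_upper1 join_upper2)
  have ac_top: "?ac = ftop X le" and bc_top: "join2 X le b ?c = ftop X le"
    using a b c by (auto intro: join_top_mono join_upper1 join_upper2)
  have "le (meet2 X le ?ac b) ?j"
  proof -
    have "meet2 X le ?ac b = join2 X le (meet2 X le b a) (meet2 X le b ?c)"
      unfolding meet_commute[of ?ac b] by (rule meet_join_distrib[OF b(1) a(1) c])
    moreover have "le (meet2 X le b a) ?j" using m_j by (simp add: meet_commute[of b a])
    moreover have "le (meet2 X le b ?c) ?j"
      using trans[OF meet_closed[OF b(1) c] c j meet_lower2[OF b(1) c] c_j] .
    ultimately show ?thesis using a b c j by (simp add: join_least meet_closed)
  qed
  moreover have "le (meet2 X le ?ac ?c) ?j"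
    using trans[OF meet_closed[OF ac c] c j meet_lower2[OF ac c] c_j] .
  ultimately have "le (join2 X le (meet2 X le ?ac b) (meet2 X le ?ac ?c)) ?j"
    using ac b c j by (intro join_least meet_closed)
  moreover have "join2 X le (meet2 X le ?ac b) (meet2 X le ?ac ?c) = ftop X le"
    using meet_join_distrib[OF ac b(1) c] bc_top ac_top top_closed by (simp add: meet_top)
  ultimately show ?thesis using j top_closed top_greatest antisym by metis
qed

lemma complemented_meet:
  assumes "complemented X le a" and "complemented X le b"
  shows "complemented X le (meet2 X le a b)"
proof -
  from assms obtain a' b' where "a \<in> X" "a' \<in> X" "meet2 X le a a' = fbot X le" "join2 X le a a' = ftop X le"
    and "b \<in> X" "b' \<in> X" "meet2 X le b b' = fbot X le" "join2 X le b b' = ftop X le"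
    unfolding complemented_def by blast
  then show ?thesis unfolding complemented_def
    by (intro conjI bexI[of _ "join2 X le a' b'"] meet_complements_bot join_complements_top
        meet_closed join_closed)
qed

end

locale frame_morphism = A: frame X le + B: frame Y le' for X le Y le' +
  fixes \<phi> assumes hom: "frame_hom X le Y le' \<phi>"
begin

lemma hom_closed: "x \<in> X \<Longrightarrow> \<phi> x \<in> Y"
  using hom unfolding frame_hom_def by blast

lemma hom_top: "\<phi> (ftop X le) = ftop Y le'"
  using hom unfolding frame_hom_def by blast

lemma hom_meet: "a \<in> X \<Longrightarrow> b \<in> X \<Longrightarrow> \<phi> (meet2 X le a b) = meet2 Y le' (\<phi> a) (\<phi> b)"
  using hom unfolding frame_hom_def by blast

lemma hom_lub: "S \<subseteq> X \<Longrightarrow> \<phi> (lub X le S) = lub Y le' (\<phi> ` S)"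
  using hom unfolding frame_hom_def by blast

lemma hom_mono: "a \<in> X \<Longrightarrow> b \<in> X \<Longrightarrow> le a b \<Longrightarrow> le' (\<phi> a) (\<phi> b)"
  by (metis A.meet_absorb B.meet_lower2 hom_closed hom_meet)

end

section \<open>Opens generated by complemented opens\<close>

definition compl_generated :: "'a set \<Rightarrow> ('a \<Rightarrow> 'a \<Rightarrow> bool) \<Rightarrow> 'a \<Rightarrow> bool" where
  "compl_generated X le x \<longleftrightarrow> x \<in> X \<and> x = lub X le {b. complemented X le b \<and> le b x}"

context frame
begin

lemma complemented_closed: "complemented X le b \<Longrightarrow> b \<in> X"
  unfolding complemented_def by blast

lemma top_complemented: "complemented X le (ftop X le)"
proof -
  have "meet2 X le (ftop X le) (fbot X le) = fbot X le"
    using meet_absorb[OF bot_closed top_closed] by (simp add: meet_commute bot_least top_closed)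
  moreover have "join2 X le (ftop X le) (fbot X le) = ftop X le"
    using top_closed bot_closed
    by (intro antisym join_closed join_least join_upper1 refl bot_least top_greatest)
  ultimately show ?thesis unfolding complemented_def using top_closed bot_closed by blast
qed

lemma complemented_below_subset: "{b. complemented X le b \<and> le b x} \<subseteq> X"
  using complemented_closed by blast

lemma compl_generatedI:
  assumes x: "x \<in> X" and le_lub: "le x (lub X le {b. complemented X le b \<and> le b x})"
  shows "compl_generated X le x"
proof -
  have "le (lub X le {b. complemented X le b \<and> le b x}) x"
    using x by (intro lub_least complemented_below_subset) auto
  with le_lub have "x = lub X le {b. complemented X le b \<and> le b x}"
    by (rule antisym[OF x lub_closed[OF complemented_below_subset]])
  with x show ?thesis unfolding compl_generated_def by blast
qed

lemma complemented_imp_compl_generated: "complemented X le b \<Longrightarrow> compl_generated X le b"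
  unfolding compl_generated_def using complemented_closed
  by (intro conjI lub_eqI[symmetric] complemented_below_subset) (auto intro: refl)

lemma compl_generated_lub:
  assumes S: "S \<subseteq> X" and gen: "\<And>s. s \<in> S \<Longrightarrow> compl_generated X le s"
  shows "compl_generated X le (lub X le S)"
proof -
  let ?x = "lub X le S"
  let ?B = "\<lambda>x. {b. complemented X le b \<and> le b x}"
  have x: "?x \<in> X" using S by (rule lub_closed)
  have "le (lub X le (?B s)) (lub X le (?B ?x))" if s: "s \<in> S" for s
    using trans[OF complemented_closed _ x _ lub_upper[OF S s]] S s
    by (intro lub_mono complemented_below_subset) blast
  then have "le ?x (lub X le (?B ?x))"
    using gen S unfolding compl_generated_def
    by (intro lub_least lub_closed complemented_below_subset) auto
  with x show ?thesis by (rule compl_generatedI)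
qed

lemma compl_generated_meet:
  assumes gx: "compl_generated X le x" and gy: "compl_generated X le y"
  shows "compl_generated X le (meet2 X le x y)"
proof -
  let ?B = "\<lambda>x. {b. complemented X le b \<and> le b x}"
  have x: "x \<in> X" and y: "y \<in> X" using gx gy unfolding compl_generated_def by auto
  let ?m = "meet2 X le x y"
  have m: "?m \<in> X" using x y by (rule meet_closed)
  have "le (meet2 X le (lub X le (?B x)) (lub X le (?B y))) (lub X le (?B ?m))"
  proof (rule meet_lub_lub_le[OF complemented_below_subset complemented_below_subset
        lub_closed[OF complemented_below_subset]])
    fix s s' assume s: "s \<in> ?B x" and s': "s' \<in> ?B y"
    then have "meet2 X le s s' \<in> ?B ?m"
      using x y complemented_closed by (auto intro: complemented_meet meet_mono)
    then show "le (meet2 X le s s') (lub X le (?B ?m))"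
      by (rule lub_upper[OF complemented_below_subset])
  qed
  then have "le ?m (lub X le (?B ?m))"
    using gx gy unfolding compl_generated_def by simp
  with m show ?thesis by (rule compl_generatedI)
qed

lemma compl_generated_glb:
  "finite F \<Longrightarrow> F \<subseteq> X \<Longrightarrow> (\<And>x. x \<in> F \<Longrightarrow> compl_generated X le x) \<Longrightarrow> compl_generated X le (glb X le F)"
proof (induction F rule: finite_induct)
  case empty
  then show ?case using complemented_imp_compl_generated[OF top_complemented] by (simp add: ftop_def)
next
  case (insert x F)
  then show ?case by (simp add: glb_insert compl_generated_meet)
qed

lemma meet_compl_generated_le:
  assumes gx: "compl_generated X le x" and a: "a \<in> X" and z: "z \<in> X"
    and le_z: "\<And>b. complemented X le b \<Longrightarrow> le b x \<Longrightarrow> le (meet2 X le a b) z"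
  shows "le (meet2 X le a x) z"
proof -
  let ?B = "{b. complemented X le b \<and> le b x}"
  have "meet2 X le a x = lub X le ((\<lambda>b. meet2 X le a b) ` ?B)"
    using gx meet_lub_distrib[OF a complemented_below_subset] unfolding compl_generated_def by metis
  also have "le \<dots> z"
    using a z le_z complemented_closed by (intro lub_least) (auto intro: meet_closed)
  finally show ?thesis .
qed

end

section \<open>Frames of functions ordered pointwise\<close>

definition pw_le :: "'m set \<Rightarrow> ('a \<Rightarrow> 'a \<Rightarrow> bool) \<Rightarrow> ('m \<Rightarrow> 'a) \<Rightarrow> ('m \<Rightarrow> 'a) \<Rightarrow> bool" where
  "pw_le I le h h' \<longleftrightarrow> (\<forall>m\<in>I. le (h m) (h' m))"

definition pw_lub :: "'m set \<Rightarrow> 'a set \<Rightarrow> ('a \<Rightarrow> 'a \<Rightarrow> bool) \<Rightarrow> ('m \<Rightarrow> 'a) set \<Rightarrow> 'm \<Rightarrow> 'a" where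
  "pw_lub I Y le S = (\<lambda>m. if m \<in> I then lub Y le ((\<lambda>h. h m) ` S) else undefined)"

definition pw_meet :: "'m set \<Rightarrow> 'a set \<Rightarrow> ('a \<Rightarrow> 'a \<Rightarrow> bool) \<Rightarrow> ('m \<Rightarrow> 'a) \<Rightarrow> ('m \<Rightarrow> 'a) \<Rightarrow> 'm \<Rightarrow> 'a" where
  "pw_meet I Y le h h' = (\<lambda>m. if m \<in> I then meet2 Y le (h m) (h' m) else undefined)"

definition pw_top :: "'m set \<Rightarrow> 'a set \<Rightarrow> ('a \<Rightarrow> 'a \<Rightarrow> bool) \<Rightarrow> 'm \<Rightarrow> 'a" where
  "pw_top I Y le = (\<lambda>m. if m \<in> I then ftop Y le else undefined)"

locale pointwise_frame = Y: frame Y le for Y le +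
  fixes I :: "'m set" and F :: "('m \<Rightarrow> 'a) set"
  assumes F_values: "\<And>h m. h \<in> F \<Longrightarrow> m \<in> I \<Longrightarrow> h m \<in> Y"
    and F_extensional: "\<And>h m. h \<in> F \<Longrightarrow> m \<notin> I \<Longrightarrow> h m = undefined"
    and pw_lub_closed: "\<And>S. S \<subseteq> F \<Longrightarrow> pw_lub I Y le S \<in> F"
    and pw_meet_closed: "\<And>h h'. h \<in> F \<Longrightarrow> h' \<in> F \<Longrightarrow> pw_meet I Y le h h' \<in> F"
    and pw_top_closed: "pw_top I Y le \<in> F"
begin

lemma eqI: "h \<in> F \<Longrightarrow> h' \<in> F \<Longrightarrow> (\<And>m. m \<in> I \<Longrightarrow> h m = h' m) \<Longrightarrow> h = h'"
  using F_extensional by (intro ext) metis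

lemma pw_antisym: "h \<in> F \<Longrightarrow> h' \<in> F \<Longrightarrow> pw_le I le h h' \<Longrightarrow> pw_le I le h' h \<Longrightarrow> h = h'"
  unfolding pw_le_def by (rule eqI) (auto intro: Y.antisym F_values)

lemma image_values: "S \<subseteq> F \<Longrightarrow> m \<in> I \<Longrightarrow> (\<lambda>h. h m) ` S \<subseteq> Y"
  using F_values by blast

lemma is_lub_pw_lub: "S \<subseteq> F \<Longrightarrow> is_lub F (pw_le I le) S (pw_lub I Y le S)"
  unfolding is_lub_def pw_le_def
proof (intro conjI ballI impI)
  assume S: "S \<subseteq> F"
  show "pw_lub I Y le S \<in> F" using S by (rule pw_lub_closed)
  fix s m assume "s \<in> S" "m \<in> I"
  then show "le (s m) (pw_lub I Y le S m)"
    using S unfolding pw_lub_def by (simp add: Y.lub_upper image_values)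
next
  fix y m assume S: "S \<subseteq> F" and y: "y \<in> F" and m: "m \<in> I"
    and ub: "\<forall>s\<in>S. \<forall>m\<in>I. le (s m) (y m)"
  show "le (pw_lub I Y le S m) (y m)"
    unfolding pw_lub_def using m S ub y by (auto intro!: Y.lub_least image_values F_values)
qed

lemma lub_eq_pw_lub: "S \<subseteq> F \<Longrightarrow> lub F (pw_le I le) S = pw_lub I Y le S"
  by (rule lub_eq_if_antisym[OF pw_antisym is_lub_pw_lub])

lemma is_glb_pw_meet: "h \<in> F \<Longrightarrow> h' \<in> F \<Longrightarrow> is_glb F (pw_le I le) {h, h'} (pw_meet I Y le h h')"
  unfolding is_glb_def pw_le_def pw_meet_def using pw_meet_closed[of h h', unfolded pw_meet_def]
  by (auto intro: Y.meet_lower1 Y.meet_lower2 Y.meet_greatest F_values)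

lemma meet_eq_pw_meet: "h \<in> F \<Longrightarrow> h' \<in> F \<Longrightarrow> meet2 F (pw_le I le) h h' = pw_meet I Y le h h'"
  unfolding meet2_def by (rule glb_eq_if_antisym[OF pw_antisym is_glb_pw_meet])

lemma top_eq_pw_top: "ftop F (pw_le I le) = pw_top I Y le"
  unfolding ftop_def
  by (rule glb_eq_if_antisym[OF pw_antisym])
    (use pw_top_closed in \<open>auto simp: is_glb_def pw_le_def pw_top_def intro: Y.top_greatest F_values\<close>)

lemma pw_meet_lub_distrib:
  assumes a: "a \<in> F" and S: "S \<subseteq> F"
  shows "pw_meet I Y le a (pw_lub I Y le S) = pw_lub I Y le (pw_meet I Y le a ` S)"
proof
  fix m show "pw_meet I Y le a (pw_lub I Y le S) m = pw_lub I Y le (pw_meet I Y le a ` S) m"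
  proof (cases "m \<in> I")
    case True
    have "(\<lambda>h. h m) ` pw_meet I Y le a ` S = (\<lambda>x. meet2 Y le (a m) x) ` ((\<lambda>h. h m) ` S)"
      using True unfolding pw_meet_def by (auto simp: image_image)
    then show ?thesis using True Y.meet_lub_distrib[OF F_values[OF a True] image_values[OF S True]]
      unfolding pw_meet_def pw_lub_def by simp
  qed (simp add: pw_meet_def pw_lub_def)
qed

lemma is_frame_pw: "is_frame F (pw_le I le)"
  unfolding is_frame_def
proof (intro conjI ballI allI impI)
  fix x assume "x \<in> F" then show "pw_le I le x x"
    unfolding pw_le_def by (auto intro: Y.refl F_values)
next
  fix x y assume "x \<in> F" "y \<in> F" "pw_le I le x y \<and> pw_le I le y x" then show "x = y"
    using pw_antisym by blast
next
  fix x y z assume "x \<in> F" "y \<in> F" "z \<in> F" "pw_le I le x y \<and> pw_le I le y z"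
  then show "pw_le I le x z" unfolding pw_le_def by (meson F_values Y.trans)
next
  fix S assume "S \<subseteq> F" then show "\<exists>x. is_lub F (pw_le I le) S x"
    using is_lub_pw_lub by blast
next
  fix a S assume a: "a \<in> F" and S: "S \<subseteq> F"
  have "(\<lambda>s. meet2 F (pw_le I le) a s) ` S = pw_meet I Y le a ` S"
    using S a meet_eq_pw_meet by (auto intro!: image_cong)
  moreover have "pw_meet I Y le a ` S \<subseteq> F" using S a pw_meet_closed by blast
  ultimately show "meet2 F (pw_le I le) a (lub F (pw_le I le) S)
      = lub F (pw_le I le) ((\<lambda>s. meet2 F (pw_le I le) a s) ` S)"
    using pw_meet_lub_distrib[OF a S]
    by (simp add: lub_eq_pw_lub S meet_eq_pw_meet[OF a pw_lub_closed[OF S]])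
qed

sublocale F: frame F "pw_le I le"
  by unfold_locales (rule is_frame_pw)

end

section \<open>Frames presented by generators and relations\<close>

definition pres_hull :: "'g set \<Rightarrow> ('g set \<times> 'g set set) set \<Rightarrow> 'g set set \<Rightarrow> 'g set set" where
  "pres_hull G R A = \<Inter> {D \<in> pres_carrier G R. A \<subseteq> D}"

definition up_closed :: "'g set \<Rightarrow> 'g set set \<Rightarrow> bool" where
  "up_closed G A \<longleftrightarrow> A \<subseteq> fin_subsets G \<and> (\<forall>S\<in>A. \<forall>S'\<in>fin_subsets G. S \<subseteq> S' \<longrightarrow> S' \<in> A)"

locale presentation =
  fixes G :: "'g set" and R :: "('g set \<times> 'g set set) set"
  assumes relations_fin: "\<And>S C. (S, C) \<in> R \<Longrightarrow> S \<in> fin_subsets G"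
begin

abbreviation "PC \<equiv> pres_carrier G R"
abbreviation "FS \<equiv> fin_subsets G"

lemma FS_Un: "A \<in> FS \<Longrightarrow> B \<in> FS \<Longrightarrow> A \<union> B \<in> FS"
  unfolding fin_subsets_def by auto

lemma PC_subset_FS: "D \<in> PC \<Longrightarrow> D \<subseteq> FS"
  unfolding pres_carrier_def by blast

lemma PC_upward: "D \<in> PC \<Longrightarrow> S \<in> D \<Longrightarrow> S' \<in> FS \<Longrightarrow> S \<subseteq> S' \<Longrightarrow> S' \<in> D"
  unfolding pres_carrier_def by blast

lemma PC_relation:
  "D \<in> PC \<Longrightarrow> (S, C) \<in> R \<Longrightarrow> U \<in> FS \<Longrightarrow> (\<And>S'. S' \<in> C \<Longrightarrow> U \<union> S' \<in> D) \<Longrightarrow> U \<union> S \<in> D"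
  unfolding pres_carrier_def by (drule CollectD, elim conjE, drule bspec, assumption, simp)

lemma PC_memI:
  "D \<subseteq> FS \<Longrightarrow> (\<And>S S'. S \<in> D \<Longrightarrow> S' \<in> FS \<Longrightarrow> S \<subseteq> S' \<Longrightarrow> S' \<in> D) \<Longrightarrow>
   (\<And>S C U. (S, C) \<in> R \<Longrightarrow> U \<in> FS \<Longrightarrow> (\<And>S'. S' \<in> C \<Longrightarrow> U \<union> S' \<in> D) \<Longrightarrow> U \<union> S \<in> D) \<Longrightarrow> D \<in> PC"
  unfolding pres_carrier_def by (auto simp: Ball_def)

lemma PC_up_closed: "D \<in> PC \<Longrightarrow> up_closed G D"
  unfolding up_closed_def using PC_subset_FS PC_upward by blast

lemma FS_in_PC: "FS \<in> PC"
  by (rule PC_memI) (auto intro: FS_Un relations_fin)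

lemma Inter_in_PC: "\<D> \<subseteq> PC \<Longrightarrow> \<D> \<noteq> {} \<Longrightarrow> \<Inter>\<D> \<in> PC"
proof (rule PC_memI)
  assume D: "\<D> \<subseteq> PC" "\<D> \<noteq> {}"
  then show "\<Inter>\<D> \<subseteq> FS" using PC_subset_FS by blast
  show "\<And>S S'. S \<in> \<Inter>\<D> \<Longrightarrow> S' \<in> FS \<Longrightarrow> S \<subseteq> S' \<Longrightarrow> S' \<in> \<Inter>\<D>"
    using D PC_upward by blast
  fix S C U assume "(S, C) \<in> R" "U \<in> FS" "\<And>S'. S' \<in> C \<Longrightarrow> U \<union> S' \<in> \<Inter>\<D>"
  then show "U \<union> S \<in> \<Inter>\<D>" using PC_relation D(1) by blast
qed

lemma Int_in_PC: "a \<in> PC \<Longrightarrow> b \<in> PC \<Longrightarrow> a \<inter> b \<in> PC"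
  using Inter_in_PC[of "{a, b}"] by simp

lemma pres_hull_in_PC: "A \<subseteq> FS \<Longrightarrow> pres_hull G R A \<in> PC"
  unfolding pres_hull_def using FS_in_PC by (intro Inter_in_PC) auto

lemma pres_hull_upper: "A \<subseteq> pres_hull G R A"
  unfolding pres_hull_def by blast

lemma pres_hull_least: "D \<in> PC \<Longrightarrow> A \<subseteq> D \<Longrightarrow> pres_hull G R A \<subseteq> D"
  unfolding pres_hull_def by blast

lemma residual_in_PC:
  assumes D: "D \<in> PC" and W: "W \<subseteq> FS"
  shows "{x \<in> FS. \<forall>V\<in>W. x \<union> V \<in> D} \<in> PC"
proof (rule PC_memI)
  show "{x \<in> FS. \<forall>V\<in>W. x \<union> V \<in> D} \<subseteq> FS" by blast
next
  fix S S' assume S: "S \<in> {x \<in> FS. \<forall>V\<in>W. x \<union> V \<in> D}" and S': "S' \<in> FS" "S \<subseteq> S'"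
  have "S' \<union> V \<in> D" if V: "V \<in> W" for V
  proof (rule PC_upward[OF D])
    show "S \<union> V \<in> D" using S V by blast
    show "S' \<union> V \<in> FS" using S'(1) V W FS_Un by blast
    show "S \<union> V \<subseteq> S' \<union> V" using S'(2) by blast
  qed
  then show "S' \<in> {x \<in> FS. \<forall>V\<in>W. x \<union> V \<in> D}" using S'(1) by blast
next
  fix S C U assume SC: "(S, C) \<in> R" and U: "U \<in> FS"
    and h: "\<And>S'. S' \<in> C \<Longrightarrow> U \<union> S' \<in> {x \<in> FS. \<forall>V\<in>W. x \<union> V \<in> D}"
  have "(U \<union> V) \<union> S \<in> D" if V: "V \<in> W" for V
  proof (rule PC_relation[OF D SC])
    show "U \<union> V \<in> FS" using U V W FS_Un by blast
    fix S' assume "S' \<in> C"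
    then have "U \<union> S' \<union> V \<in> D" using h V by blast
    then show "U \<union> V \<union> S' \<in> D" by (simp add: Un_ac)
  qed
  then have "\<forall>V\<in>W. U \<union> S \<union> V \<in> D" by (simp add: Un_ac)
  moreover have "U \<union> S \<in> FS" using U relations_fin[OF SC] FS_Un by blast
  ultimately show "U \<union> S \<in> {x \<in> FS. \<forall>V\<in>W. x \<union> V \<in> D}" by blast
qed

text \<open>The hull is a nucleus on up-closed families: the residual of the hull of A \<inter> B by A
  contains B, and its residual by the hull of B contains A.\<close>

lemma pres_hull_Int:
  assumes A: "up_closed G A" and B: "up_closed G B"
  shows "pres_hull G R A \<inter> pres_hull G R B \<subseteq> pres_hull G R (A \<inter> B)"
proof -
  let ?J = "pres_hull G R (A \<inter> B)"
  have AF: "A \<subseteq> FS" and BF: "B \<subseteq> FS" using A B unfolding up_closed_def by auto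
  have J: "?J \<in> PC" using AF by (intro pres_hull_in_PC) auto
  have "B \<subseteq> {x \<in> FS. \<forall>V\<in>A. x \<union> V \<in> ?J}"
  proof
    fix x assume x: "x \<in> B"
    have "x \<union> V \<in> A \<inter> B" if V: "V \<in> A" for V
    proof
      have xV: "x \<union> V \<in> FS" using x V AF BF FS_Un by blast
      show "x \<union> V \<in> A" using A V xV unfolding up_closed_def by blast
      show "x \<union> V \<in> B" using B x xV unfolding up_closed_def by blast
    qed
    then show "x \<in> {x \<in> FS. \<forall>V\<in>A. x \<union> V \<in> ?J}" using x BF pres_hull_upper by blast
  qed
  then have hB: "pres_hull G R B \<subseteq> {x \<in> FS. \<forall>V\<in>A. x \<union> V \<in> ?J}"
    using pres_hull_least residual_in_PC[OF J AF] by blast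
  have hBF: "pres_hull G R B \<subseteq> FS" using pres_hull_in_PC[OF BF] PC_subset_FS by blast
  have "A \<subseteq> {V \<in> FS. \<forall>x\<in>pres_hull G R B. V \<union> x \<in> ?J}"
  proof
    fix V assume V: "V \<in> A"
    have "V \<union> x \<in> ?J" if "x \<in> pres_hull G R B" for x
    proof -
      have "x \<union> V \<in> ?J" using hB V that by blast
      then show ?thesis by (simp add: Un_commute)
    qed
    then show "V \<in> {V \<in> FS. \<forall>x\<in>pres_hull G R B. V \<union> x \<in> ?J}" using V AF by blast
  qed
  then have hA: "pres_hull G R A \<subseteq> {V \<in> FS. \<forall>x\<in>pres_hull G R B. V \<union> x \<in> ?J}"
    using pres_hull_least residual_in_PC[OF J hBF] by blast
  show ?thesis
  proof
    fix x assume "x \<in> pres_hull G R A \<inter> pres_hull G R B"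
    then have "x \<union> x \<in> ?J" using hA by blast
    then show "x \<in> ?J" by simp
  qed
qed

lemma is_lub_PC:
  assumes S: "S \<subseteq> PC"
  shows "is_lub PC (\<subseteq>) S (pres_hull G R (\<Union>S))"
  unfolding is_lub_def
proof (intro conjI ballI impI)
  show "pres_hull G R (\<Union>S) \<in> PC" using S PC_subset_FS by (intro pres_hull_in_PC) blast
  show "s \<subseteq> pres_hull G R (\<Union>S)" if "s \<in> S" for s
    using that pres_hull_upper[of "\<Union>S"] by blast
  show "pres_hull G R (\<Union>S) \<subseteq> y" if "y \<in> PC" "\<forall>s\<in>S. s \<subseteq> y" for y
    using that by (intro pres_hull_least) blast+
qed

lemma lub_PC: "S \<subseteq> PC \<Longrightarrow> lub PC (\<subseteq>) S = pres_hull G R (\<Union>S)"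
  by (rule lub_subset_eq[OF is_lub_PC])

lemma meet_PC: "a \<in> PC \<Longrightarrow> b \<in> PC \<Longrightarrow> meet2 PC (\<subseteq>) a b = a \<inter> b"
proof -
  assume "a \<in> PC" "b \<in> PC"
  then have "is_glb PC (\<subseteq>) {a, b} (a \<inter> b)"
    unfolding is_glb_def using Int_in_PC by blast
  then show ?thesis unfolding meet2_def by (rule glb_subset_eq)
qed

lemma glb_PC: "F \<subseteq> PC \<Longrightarrow> glb PC (\<subseteq>) F = FS \<inter> \<Inter>F"
proof -
  assume F: "F \<subseteq> PC"
  have "\<Inter>(insert FS F) \<in> PC" using F FS_in_PC by (intro Inter_in_PC) auto
  then have "FS \<inter> \<Inter>F \<in> PC" by simp
  then have "is_glb PC (\<subseteq>) F (FS \<inter> \<Inter>F)"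
    unfolding is_glb_def using F PC_subset_FS by blast
  then show ?thesis by (rule glb_subset_eq)
qed

lemma is_frame_PC: "is_frame PC (\<subseteq>)"
  unfolding is_frame_def
proof (intro conjI ballI allI impI)
  fix S assume "S \<subseteq> PC" then show "\<exists>x. is_lub PC (\<subseteq>) S x" using is_lub_PC by blast
next
  fix a S assume a: "a \<in> PC" and S: "S \<subseteq> PC"
  have US: "up_closed G (\<Union>S)" using S PC_up_closed unfolding up_closed_def by blast
  have im: "(\<lambda>s. meet2 PC (\<subseteq>) a s) ` S = (\<lambda>s. a \<inter> s) ` S"
    using a S meet_PC by (auto intro!: image_cong)
  have sub: "(\<lambda>s. a \<inter> s) ` S \<subseteq> PC" using a S Int_in_PC by auto
  have hull: "pres_hull G R (\<Union>S) \<in> PC" using S PC_subset_FS by (intro pres_hull_in_PC) blast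
  have "a \<inter> pres_hull G R (\<Union>S) = pres_hull G R (\<Union>((\<lambda>s. a \<inter> s) ` S))"
  proof
    have "a = pres_hull G R a" using a pres_hull_upper pres_hull_least by blast
    then have "a \<inter> pres_hull G R (\<Union>S) \<subseteq> pres_hull G R (a \<inter> \<Union>S)"
      using pres_hull_Int[OF PC_up_closed[OF a] US] by simp
    also have "a \<inter> \<Union>S = \<Union>((\<lambda>s. a \<inter> s) ` S)" by blast
    finally show "a \<inter> pres_hull G R (\<Union>S) \<subseteq> pres_hull G R (\<Union>((\<lambda>s. a \<inter> s) ` S))" .
    show "pres_hull G R (\<Union>((\<lambda>s. a \<inter> s) ` S)) \<subseteq> a \<inter> pres_hull G R (\<Union>S)"
      using a hull pres_hull_upper by (intro pres_hull_least Int_in_PC) blast+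
  qed
  then show "meet2 PC (\<subseteq>) a (lub PC (\<subseteq>) S) = lub PC (\<subseteq>) ((\<lambda>s. meet2 PC (\<subseteq>) a s) ` S)"
    unfolding im lub_PC[OF S] lub_PC[OF sub] meet_PC[OF a hull] .
qed auto

sublocale P: frame PC "(\<subseteq>)"
  by unfold_locales (rule is_frame_PC)

lemma top_PC: "ftop PC (\<subseteq>) = FS"
  unfolding ftop_def
  by (rule glb_subset_eq) (auto simp: is_glb_def FS_in_PC dest: PC_subset_FS)

lemma Int_lub_PC: "b \<in> PC \<Longrightarrow> S \<subseteq> PC \<Longrightarrow> b \<inter> lub PC (\<subseteq>) S = lub PC (\<subseteq>) ((\<inter>) b ` S)"
  using P.meet_lub_distrib[of b S] P.lub_closed[of S] meet_PC by (simp add: subset_iff cong: image_cong)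

lemma bot_PC: "fbot PC (\<subseteq>) = pres_hull G R {}"
  unfolding fbot_def by (simp add: lub_PC)

lemma pres_gen_eq_hull: "g \<in> G \<Longrightarrow> pres_gen G R g = pres_hull G R {S \<in> FS. g \<in> S}"
  unfolding pres_gen_def pres_hull_def
proof (intro arg_cong[where f=Inter] Collect_cong conj_cong refl)
  fix D assume g: "g \<in> G" and D: "D \<in> PC"
  have "{g} \<in> FS" using g by (simp add: fin_subsets_def)
  then show "({g} \<in> D) = ({S \<in> FS. g \<in> S} \<subseteq> D)" using D PC_upward by blast
qed

end

section \<open>The frame of opens of LB_0 T\<close>

locale ranked_monad =
  fixes M :: "('i, 't) set_monad" and c0 c1 :: 'i and K :: "'k set"
  assumes monad: "is_set_monad M" and rank: "ranked M K"
begin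

abbreviation "T1 \<equiv> Tm M {c0}"
abbreviation "T2 \<equiv> Tm M {c0, c1}"

lemma ret_in: "a \<in> A \<Longrightarrow> ret M A a \<in> Tm M A"
  using monad[unfolded is_set_monad_def, THEN conjunct1] by blast

lemma bnd_in: "t \<in> Tm M A \<Longrightarrow> (\<And>a. a \<in> A \<Longrightarrow> u a \<in> Tm M B) \<Longrightarrow> bnd M A B t u \<in> Tm M B"
  using monad[unfolded is_set_monad_def, THEN conjunct2, THEN conjunct1] by blast

lemma bnd_ret: "t \<in> Tm M A \<Longrightarrow> bnd M A A t (ret M A) = t"
  using monad[unfolded is_set_monad_def, THEN conjunct2, THEN conjunct2, THEN conjunct2,
      THEN conjunct2, THEN conjunct1] by blast

lemma mapsto_in: "t \<in> Tm M A \<Longrightarrow> mapsto M c0 c1 A t a \<in> T2"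
  unfolding mapsto_def by (rule bnd_in) (auto intro: ret_in)

lemma rank_nonempty: "K \<noteq> {}"
proof
  assume K: "K = {}"
  have "ret M {c0} c0 \<in> T1" by (rule ret_in) simp
  then obtain I :: "'i set" where "(card_of I, card_of K) \<in> ordLess"
    using rank unfolding ranked_def by blast
  then show False using K not_ordLess_ordLeq card_of_empty by blast
qed

lemma lb0_rels_fin: "(S, C) \<in> lb0_rels M c0 c1 \<Longrightarrow> S \<in> fin_subsets T2"
  unfolding lb0_rels_def fin_subsets_def by (auto intro!: mapsto_in bnd_in)

sublocale presentation T2 "lb0_rels M c0 c1"
  by unfold_locales (rule lb0_rels_fin)

lemma LB0_eq: "LB0 M c0 c1 = PC"
  unfolding LB0_def ..

lemma lb0_rel_disjoint:
  "t \<in> Tm M A \<Longrightarrow> a \<in> A \<Longrightarrow> a' \<in> A \<Longrightarrow> a \<noteq> a' \<Longrightarrow>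
    ({mapsto M c0 c1 A t a, mapsto M c0 c1 A t a'}, {}) \<in> lb0_rels M c0 c1"
  unfolding lb0_rels_def by (intro UnI1) blast

lemma lb0_rel_const:
  "t \<in> Tm M A \<Longrightarrow> a \<in> A \<Longrightarrow>
    ({}, {{mapsto M c0 c1 A (bnd M A A t (\<lambda>_. ret M A a)) a}}) \<in> lb0_rels M c0 c1"
  unfolding lb0_rels_def by (intro UnI1 UnI2) blast

lemma lb0_rel_bnd:
  "t \<in> Tm M A \<Longrightarrow> (\<And>a. a \<in> A \<Longrightarrow> u a \<in> Tm M B) \<Longrightarrow> b \<in> B \<Longrightarrow>
    ({mapsto M c0 c1 B (bnd M A B t u) b},
     {{mapsto M c0 c1 A t a, mapsto M c0 c1 B (bnd M A B t (\<lambda>_. u a)) b} | a. a \<in> A})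
    \<in> lb0_rels M c0 c1"
  unfolding lb0_rels_def by (rule UnI1, rule UnI2) blast

definition principal_up :: "'t \<Rightarrow> 't set set" where
  "principal_up g = {S \<in> FS. g \<in> S}"

lemma principal_up_up_closed: "up_closed T2 (principal_up g)"
  unfolding up_closed_def principal_up_def by blast

lemma principal_up_subset_FS: "principal_up g \<subseteq> FS"
  unfolding principal_up_def by blast

lemma lb0_gen_eq_hull: "g \<in> T2 \<Longrightarrow> lb0_gen M c0 c1 g = pres_hull T2 (lb0_rels M c0 c1) (principal_up g)"
  unfolding lb0_gen_def principal_up_def by (rule pres_gen_eq_hull)

lemma lb0_gen_in_PC: "g \<in> T2 \<Longrightarrow> lb0_gen M c0 c1 g \<in> PC"
  by (simp add: lb0_gen_eq_hull pres_hull_in_PC principal_up_subset_FS)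

lemma singleton_in_lb0_gen: "g \<in> T2 \<Longrightarrow> {g} \<in> lb0_gen M c0 c1 g"
proof -
  assume g: "g \<in> T2"
  have "{g} \<in> principal_up g" using g unfolding principal_up_def fin_subsets_def by simp
  then show ?thesis using g lb0_gen_eq_hull pres_hull_upper by blast
qed

lemma lb0_gen_mapsto_disjoint:
  assumes t: "t \<in> Tm M A" and a: "a \<in> A" "a' \<in> A" "a \<noteq> a'"
  shows "lb0_gen M c0 c1 (mapsto M c0 c1 A t a) \<inter> lb0_gen M c0 c1 (mapsto M c0 c1 A t a') = fbot PC (\<subseteq>)"
proof -
  let ?g = "mapsto M c0 c1 A t a" and ?g' = "mapsto M c0 c1 A t a'"
  let ?hull = "pres_hull T2 (lb0_rels M c0 c1)"
  have g: "?g \<in> T2" "?g' \<in> T2" using t by (auto intro: mapsto_in)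
  have bot: "?hull {} \<in> PC" by (rule pres_hull_in_PC) simp
  have "principal_up ?g \<inter> principal_up ?g' \<subseteq> ?hull {}"
  proof
    fix S assume S: "S \<in> principal_up ?g \<inter> principal_up ?g'"
    show "S \<in> ?hull {}" unfolding pres_hull_def
    proof
      fix D assume "D \<in> {D \<in> PC. {} \<subseteq> D}"
      then have D: "D \<in> PC" by blast
      have "S \<union> {?g, ?g'} \<in> D"
        by (rule PC_relation[OF D lb0_rel_disjoint[OF t a]]) (use S in \<open>auto simp: principal_up_def\<close>)
      moreover have "S \<union> {?g, ?g'} = S" using S unfolding principal_up_def by blast
      ultimately show "S \<in> D" by simp
    qed
  qed
  then have "?hull (principal_up ?g \<inter> principal_up ?g') \<subseteq> ?hull {}"
    using pres_hull_least[OF bot] by blast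
  moreover have "?hull (principal_up ?g) \<inter> ?hull (principal_up ?g')
      \<subseteq> ?hull (principal_up ?g \<inter> principal_up ?g')"
    by (rule pres_hull_Int[OF principal_up_up_closed principal_up_up_closed])
  moreover have "?hull {} \<subseteq> ?hull (principal_up ?g) \<inter> ?hull (principal_up ?g')"
    using pres_hull_least pres_hull_in_PC[OF principal_up_subset_FS] by (metis Int_greatest empty_subsetI)
  ultimately show ?thesis unfolding bot_PC lb0_gen_eq_hull[OF g(1)] lb0_gen_eq_hull[OF g(2)] by blast
qed

text \<open>The generators [t \<mapsto> a], a \<in> A, cover: [t \<mapsto> a0] for the constant computation
  t \<then> return a0 is the top, and it is covered by the [t \<mapsto> a] through the bind relation.\<close>

lemma lub_lb0_gen_mapsto:
  assumes t: "t \<in> Tm M A" and a0: "a0 \<in> A"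
  shows "lub PC (\<subseteq>) {lb0_gen M c0 c1 (mapsto M c0 c1 A t a) | a. a \<in> A} = FS"
proof -
  let ?S = "{lb0_gen M c0 c1 (mapsto M c0 c1 A t a) | a. a \<in> A}"
  have S: "?S \<subseteq> PC" using t by (auto intro!: lb0_gen_in_PC mapsto_in)
  let ?D = "lub PC (\<subseteq>) ?S"
  have D: "?D \<in> PC" using S by (rule P.lub_closed)
  let ?u = "\<lambda>_::'i. ret M A a0"
  let ?gs = "mapsto M c0 c1 A (bnd M A A t ?u) a0"
  have gs: "?gs \<in> T2" using t a0 by (auto intro!: mapsto_in bnd_in ret_in)
  have ga: "{mapsto M c0 c1 A t a} \<in> ?D" if a: "a \<in> A" for a
  proof -
    have "lb0_gen M c0 c1 (mapsto M c0 c1 A t a) \<subseteq> ?D" using a S by (intro P.lub_upper) auto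
    then show ?thesis using singleton_in_lb0_gen mapsto_in[OF t] by blast
  qed
  have "FS \<subseteq> ?D"
  proof
    fix U assume U: "U \<in> FS"
    have "U \<union> {?gs} \<in> ?D"
    proof (rule PC_relation[OF D lb0_rel_bnd[OF t, of ?u A a0]])
      show "\<And>a. a \<in> A \<Longrightarrow> ret M A a0 \<in> Tm M A" using a0 by (rule ret_in)
      fix S' assume "S' \<in> {{mapsto M c0 c1 A t a, mapsto M c0 c1 A (bnd M A A t (\<lambda>_. ?u a)) a0} | a. a \<in> A}"
      then obtain a where a: "a \<in> A" and S': "S' = {mapsto M c0 c1 A t a, ?gs}" by blast
      have "U \<union> S' \<in> FS" using U S' gs mapsto_in[OF t] unfolding fin_subsets_def by auto
      moreover have "{mapsto M c0 c1 A t a} \<subseteq> U \<union> S'" using S' by blast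
      ultimately show "U \<union> S' \<in> ?D" using PC_upward[OF D ga[OF a]] by blast
    qed (use a0 U in auto)
    then have "U \<union> {} \<in> ?D"
      by (intro PC_relation[OF D lb0_rel_const[OF t a0]]) (use U in auto)
    then show "U \<in> ?D" by simp
  qed
  then show ?thesis using D PC_subset_FS by blast
qed

lemma lb0_gen_mapsto_complemented:
  assumes t: "t \<in> Tm M A" and a: "a \<in> A"
  shows "complemented PC (\<subseteq>) (lb0_gen M c0 c1 (mapsto M c0 c1 A t a))"
proof -
  let ?gen = "\<lambda>a. lb0_gen M c0 c1 (mapsto M c0 c1 A t a)"
  let ?b = "?gen a"
  let ?S = "{?gen a' | a'. a' \<in> A \<and> a' \<noteq> a}"
  let ?c = "lub PC (\<subseteq>) ?S"
  have gen: "?gen x \<in> PC" for x using t by (intro lb0_gen_in_PC mapsto_in)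
  have b: "?b \<in> PC" and S: "?S \<subseteq> PC" using gen by auto
  have c: "?c \<in> PC" using S by (rule P.lub_closed)
  have "meet2 PC (\<subseteq>) ?b ?c = lub PC (\<subseteq>) ((\<lambda>s. meet2 PC (\<subseteq>) ?b s) ` ?S)"
    using b S by (rule P.meet_lub_distrib)
  also have "\<dots> = fbot PC (\<subseteq>)"
    using lb0_gen_mapsto_disjoint[OF t a] gen by (intro P.lub_below_bot) (auto simp: meet_PC)
  finally have bot: "meet2 PC (\<subseteq>) ?b ?c = fbot PC (\<subseteq>)" .
  have j: "join2 PC (\<subseteq>) ?b ?c \<in> PC" using b c by (rule P.join_closed)
  have "FS = lub PC (\<subseteq>) {?gen a | a. a \<in> A}"
    using lub_lb0_gen_mapsto[OF t a] by simp
  also have "\<dots> \<subseteq> join2 PC (\<subseteq>) ?b ?c"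
  proof (rule P.lub_least)
    fix s assume "s \<in> {?gen a | a. a \<in> A}"
    then obtain a' where a': "a' \<in> A" "s = ?gen a'" by blast
    show "s \<subseteq> join2 PC (\<subseteq>) ?b ?c"
    proof (cases "a' = a")
      case True then show ?thesis using a' P.join_upper1[OF b c] by simp
    next
      case False
      then have "s \<subseteq> ?c" using a' S P.lub_upper by blast
      then show ?thesis using P.join_upper2[OF b c] by blast
    qed
  qed (use gen j in auto)
  finally have "join2 PC (\<subseteq>) ?b ?c = ftop PC (\<subseteq>)" using j PC_subset_FS top_PC by blast
  then show ?thesis unfolding complemented_def using b c bot by blast
qed

end

section \<open>Trace equivalence\<close>

context ranked_monad
begin

abbreviation "tr1 \<equiv> trace1 M c0 c1 K"
abbreviation "tr \<equiv> trace M c0 c1 K"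

definition trace1_gens :: "'t \<Rightarrow> 't \<Rightarrow> 't set set set" where
  "trace1_gens m m' = {lb0_gen M c0 c1 (mapsto M c0 c1 A t a) | A t u u' a.
     (card_of A, card_of K) \<in> ordLeq \<and> t \<in> Tm M A \<and>
     (\<forall>x\<in>A. u x \<in> Tm M {c0}) \<and> (\<forall>x\<in>A. u' x \<in> Tm M {c0}) \<and>
     a \<in> A \<and> u a = u' a \<and> m = bnd M A {c0} t u \<and> m' = bnd M A {c0} t u'}"

lemma trace1_eq: "tr1 m m' = lub PC (\<subseteq>) (trace1_gens m m')"
  unfolding trace1_def trace1_gens_def LB0_eq ..

lemma trace1_gens_complemented: "s \<in> trace1_gens m m' \<Longrightarrow> complemented PC (\<subseteq>) s"
  unfolding trace1_gens_def using lb0_gen_mapsto_complemented by blast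

lemma trace1_gens_subset: "trace1_gens m m' \<subseteq> PC"
  using trace1_gens_complemented P.complemented_closed by blast

lemma trace1_in_PC: "tr1 m m' \<in> PC"
  unfolding trace1_eq by (rule P.lub_closed[OF trace1_gens_subset])

lemma compl_generated_trace1: "compl_generated PC (\<subseteq>) (tr1 m m')"
  unfolding trace1_eq
  by (rule P.compl_generated_lub[OF trace1_gens_subset])
    (rule P.complemented_imp_compl_generated[OF trace1_gens_complemented])

lemma trace1_gens_commute_subset: "trace1_gens m m' \<subseteq> trace1_gens m' m"
proof
  fix x assume "x \<in> trace1_gens m m'"
  then obtain A t u u' a where x: "x = lb0_gen M c0 c1 (mapsto M c0 c1 A t a)"
    "(card_of A, card_of K) \<in> ordLeq" "t \<in> Tm M A"
    "\<forall>x\<in>A. u x \<in> Tm M {c0}" "\<forall>x\<in>A. u' x \<in> Tm M {c0}"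
    "a \<in> A" "u a = u' a" "m = bnd M A {c0} t u" "m' = bnd M A {c0} t u'"
    unfolding trace1_gens_def by blast
  show "x \<in> trace1_gens m' m" unfolding trace1_gens_def
    using x(1-6,8,9) x(7)[symmetric]
    by (intro CollectI exI[of _ A] exI[of _ t] exI[of _ u'] exI[of _ u] exI[of _ a] conjI) assumption+
qed

lemma trace1_gens_commute: "trace1_gens m m' = trace1_gens m' m"
  by (intro equalityI trace1_gens_commute_subset)

lemma trace1_commute: "tr1 m m' = tr1 m' m"
  unfolding trace1_eq by (subst trace1_gens_commute) (rule refl)

text \<open>Reflexivity is witnessed by m = m \<bind> return over the one-element set 1, where
  [m \<mapsto> c0] is the top element.\<close>

lemma trace1_refl: "m \<in> T1 \<Longrightarrow> tr1 m m = FS"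
proof -
  assume m: "m \<in> T1"
  let ?g = "lb0_gen M c0 c1 (mapsto M c0 c1 {c0} m c0)"
  have "{lb0_gen M c0 c1 (mapsto M c0 c1 {c0} m a) | a. a \<in> {c0}} = {?g}" by blast
  moreover have "lub PC (\<subseteq>) {?g} = ?g"
    using m by (intro P.lub_eqI) (auto intro: lb0_gen_in_PC mapsto_in)
  ultimately have g: "?g = FS" using lub_lb0_gen_mapsto[OF m] by simp
  have "?g \<in> trace1_gens m m"
    unfolding trace1_gens_def
  proof (intro CollectI exI[of _ "{c0}"] exI[of _ m] exI[of _ "ret M {c0}"] exI[of _ "ret M {c0}"]
      exI[of _ c0] conjI)
    show "(card_of {c0}, card_of K) \<in> ordLeq" using rank_nonempty by (rule card_of_singl_ordLeq)
  qed (use m bnd_ret[OF m] in \<open>auto intro: ret_in\<close>)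
  then have "FS \<subseteq> tr1 m m"
    unfolding trace1_eq using g P.lub_upper[OF trace1_gens_subset] by metis
  then show ?thesis using trace1_in_PC PC_subset_FS by blast
qed

definition chain_steps :: "nat \<Rightarrow> (nat \<Rightarrow> 't) \<Rightarrow> 't set set set" where
  "chain_steps k ms = {tr1 (ms i) (ms (Suc i)) | i. i < k}"

definition trace_chains :: "'t \<Rightarrow> 't \<Rightarrow> 't set set set" where
  "trace_chains m m' = {glb PC (\<subseteq>) (chain_steps k ms) | k ms.
     1 \<le> k \<and> ms 0 = m \<and> ms k = m' \<and> (\<forall>i\<le>k. ms i \<in> T1)}"

lemma trace_eq: "tr m m' = lub PC (\<subseteq>) (trace_chains m m')"
  unfolding trace_def trace_chains_def chain_steps_def LB0_eq ..

lemma chain_steps_subset: "chain_steps k ms \<subseteq> PC"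
  unfolding chain_steps_def using trace1_in_PC by blast

lemma finite_chain_steps: "finite (chain_steps k ms)"
proof -
  have "chain_steps k ms = (\<lambda>i. tr1 (ms i) (ms (Suc i))) ` {..<k}"
    unfolding chain_steps_def by auto
  then show ?thesis by simp
qed

lemma trace_chains_subset: "trace_chains m m' \<subseteq> PC"
  unfolding trace_chains_def using P.glb_closed[OF chain_steps_subset] by blast

lemma trace_in_PC: "tr m m' \<in> PC"
  unfolding trace_eq by (rule P.lub_closed[OF trace_chains_subset])

lemma compl_generated_trace: "compl_generated PC (\<subseteq>) (tr m m')"
  unfolding trace_eq
proof (rule P.compl_generated_lub[OF trace_chains_subset])
  fix s assume "s \<in> trace_chains m m'"
  then obtain k ms where "s = glb PC (\<subseteq>) (chain_steps k ms)"
    unfolding trace_chains_def by blast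
  then show "compl_generated PC (\<subseteq>) s"
    using finite_chain_steps chain_steps_subset compl_generated_trace1
    by (auto simp: chain_steps_def intro!: P.compl_generated_glb)
qed

lemma trace1_le_trace: "m \<in> T1 \<Longrightarrow> m' \<in> T1 \<Longrightarrow> tr1 m m' \<subseteq> tr m m'"
proof -
  assume m: "m \<in> T1" and m': "m' \<in> T1"
  define ms where "ms = (\<lambda>i::nat. if i = 0 then m else m')"
  have "chain_steps 1 ms = {tr1 m m'}"
    unfolding chain_steps_def ms_def by auto
  then have "glb PC (\<subseteq>) (chain_steps 1 ms) = tr1 m m'"
    using glb_PC[of "{tr1 m m'}"] trace1_in_PC PC_subset_FS[OF trace1_in_PC]
    by (simp add: Int_absorb1)
  moreover have "glb PC (\<subseteq>) (chain_steps 1 ms) \<in> trace_chains m m'"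
    unfolding trace_chains_def using m m' by (intro CollectI exI[of _ 1] exI[of _ ms]) (auto simp: ms_def)
  ultimately show ?thesis unfolding trace_eq using P.lub_upper[OF trace_chains_subset] by metis
qed

lemma trace_refl: "m \<in> T1 \<Longrightarrow> tr m m = FS"
  using trace1_le_trace[of m m] trace1_refl[of m] trace_in_PC PC_subset_FS by blast

lemma chain_steps_reverse_append:
  assumes "ms 0 = ns 0"
  shows "chain_steps (k + l) (\<lambda>i. if i \<le> k then ms (k - i) else ns (i - k))
    \<subseteq> chain_steps k ms \<union> chain_steps l ns"
proof
  let ?ps = "\<lambda>i. if i \<le> k then ms (k - i) else ns (i - k)"
  fix y assume "y \<in> chain_steps (k + l) ?ps"
  then obtain i where i: "i < k + l" and y: "y = tr1 (?ps i) (?ps (Suc i))"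
    unfolding chain_steps_def by blast
  show "y \<in> chain_steps k ms \<union> chain_steps l ns"
  proof (cases "i < k")
    case True
    define j where "j = k - Suc i"
    have "?ps i = ms (Suc j)" "?ps (Suc i) = ms j"
      unfolding j_def using True by (auto simp: Suc_diff_Suc)
    then have "y = tr1 (ms j) (ms (Suc j))"
      unfolding y by (simp add: trace1_commute[of "ms j"])
    moreover have "j < k" unfolding j_def using True by simp
    ultimately show ?thesis unfolding chain_steps_def by blast
  next
    case False
    then have "?ps i = ns (i - k)" "?ps (Suc i) = ns (Suc (i - k))"
      using assms by (auto simp: Suc_diff_le)
    then show ?thesis unfolding chain_steps_def using False i y by auto
  qed
qed

lemma trace_trans: "tr m a \<inter> tr m b \<subseteq> tr a b"
proof -
  have "meet2 PC (\<subseteq>) (lub PC (\<subseteq>) (trace_chains m a)) (lub PC (\<subseteq>) (trace_chains m b))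
      \<subseteq> lub PC (\<subseteq>) (trace_chains a b)"
  proof (rule P.meet_lub_lub_le[OF trace_chains_subset trace_chains_subset
        P.lub_closed[OF trace_chains_subset]])
    fix s s' assume s: "s \<in> trace_chains m a" and s': "s' \<in> trace_chains m b"
    from s obtain k ms where s_eq: "s = glb PC (\<subseteq>) (chain_steps k ms)"
      and k: "1 \<le> k" "ms 0 = m" "ms k = a" "\<forall>i\<le>k. ms i \<in> T1"
      unfolding trace_chains_def by blast
    from s' obtain l ns where s'_eq: "s' = glb PC (\<subseteq>) (chain_steps l ns)"
      and l: "1 \<le> l" "ns 0 = m" "ns l = b" "\<forall>i\<le>l. ns i \<in> T1"
      unfolding trace_chains_def by blast
    define ps where "ps = (\<lambda>i. if i \<le> k then ms (k - i) else ns (i - k))"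
    have "glb PC (\<subseteq>) (chain_steps (k + l) ps) \<in> trace_chains a b"
      unfolding trace_chains_def
    proof (intro CollectI exI conjI)
      show "\<forall>i\<le>k + l. ps i \<in> T1" unfolding ps_def using k l by auto
    qed (use k l in \<open>auto simp: ps_def\<close>)
    moreover have "chain_steps (k + l) ps \<subseteq> chain_steps k ms \<union> chain_steps l ns"
      unfolding ps_def using k(2) l(2) by (intro chain_steps_reverse_append) simp
    then have "s \<inter> s' \<subseteq> glb PC (\<subseteq>) (chain_steps (k + l) ps)"
      unfolding s_eq s'_eq glb_PC[OF chain_steps_subset] by blast
    moreover have "meet2 PC (\<subseteq>) s s' = s \<inter> s'"
      using s s' trace_chains_subset by (intro meet_PC) auto
    ultimately show "meet2 PC (\<subseteq>) s s' \<subseteq> lub PC (\<subseteq>) (trace_chains a b)"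
      using P.lub_upper[OF trace_chains_subset] by blast
  qed
  then show ?thesis
    unfolding trace_eq
    using meet_PC[OF P.lub_closed[OF trace_chains_subset] P.lub_closed[OF trace_chains_subset]] by simp
qed

lemma trace_commute_le: "a \<in> T1 \<Longrightarrow> tr a b \<subseteq> tr b a"
  using trace_trans[of a b a] trace_refl[of a] trace_in_PC PC_subset_FS by blast

end

section \<open>The frame of opens of LB_1 T\<close>

context ranked_monad
begin

abbreviation "LB1' \<equiv> LB1 M c0 c1 K"

lemma LB1_values: "w \<in> LB1' \<Longrightarrow> m \<in> T1 \<Longrightarrow> w m \<in> PC"
  unfolding LB1_def LB0_eq by blast

lemma LB1_extensional: "w \<in> LB1' \<Longrightarrow> m \<notin> T1 \<Longrightarrow> w m = undefined"
  unfolding LB1_def by blast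

lemma LB1_compat:
  assumes w: "w \<in> LB1'" and b: "complemented PC (\<subseteq>) b"
    and m: "m1 \<in> T1" "m2 \<in> T1" and b_le: "b \<subseteq> tr m1 m2"
  shows "b \<inter> w m1 = b \<inter> w m2"
proof -
  have "meet2 PC (\<subseteq>) b (w m1) = meet2 PC (\<subseteq>) b (w m2)"
    using w b m b_le unfolding LB1_def LB0_eq trace_equiv_def by blast
  then show ?thesis
    using P.complemented_closed[OF b] LB1_values[OF w] m by (simp add: meet_PC)
qed

lemma LB1_memI:
  assumes "\<And>m. m \<in> T1 \<Longrightarrow> w m \<in> PC" and "\<And>m. m \<notin> T1 \<Longrightarrow> w m = undefined"
    and "\<And>b m1 m2. complemented PC (\<subseteq>) b \<Longrightarrow> m1 \<in> T1 \<Longrightarrow> m2 \<in> T1 \<Longrightarrow> b \<subseteq> tr m1 m2 \<Longrightarrow>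
      b \<inter> w m1 = b \<inter> w m2"
  shows "w \<in> LB1'"
  using assms P.complemented_closed unfolding LB1_def LB0_eq trace_equiv_def by (simp add: meet_PC)

lemma sigma_inv_in_LB1: "x \<in> PC \<Longrightarrow> sigma_inv M c0 x \<in> LB1'"
  unfolding sigma_inv_def by (rule LB1_memI) auto

definition trace_to :: "'t \<Rightarrow> 't \<Rightarrow> 't set set" where
  "trace_to m0 = (\<lambda>m. if m \<in> T1 then tr m m0 else undefined)"

lemma trace_to_in_LB1: "m0 \<in> T1 \<Longrightarrow> trace_to m0 \<in> LB1'"
proof (rule LB1_memI)
  fix b m1 m2 assume "complemented PC (\<subseteq>) b" and m: "m1 \<in> T1" "m2 \<in> T1" and b12: "b \<subseteq> tr m1 m2"
  have b21: "b \<subseteq> tr m2 m1" using b12 trace_commute_le[OF m(1)] by (rule order_trans)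
  have "b \<inter> tr m1 m0 \<subseteq> tr m2 m0" and "b \<inter> tr m2 m0 \<subseteq> tr m1 m0"
    using b12 b21 trace_trans[of m1 m2 m0] trace_trans[of m2 m1 m0] by blast+
  then show "b \<inter> trace_to m0 m1 = b \<inter> trace_to m0 m2" unfolding trace_to_def using m by auto
qed (auto simp: trace_to_def trace_in_PC)

lemma LB1_pw_lub_closed:
  assumes S: "S \<subseteq> LB1'"
  shows "pw_lub T1 PC (\<subseteq>) S \<in> LB1'"
proof (rule LB1_memI)
  have img: "(\<lambda>h. h m) ` S \<subseteq> PC" if "m \<in> T1" for m using S LB1_values that by blast
  then show "pw_lub T1 PC (\<subseteq>) S m \<in> PC" if "m \<in> T1" for m
    unfolding pw_lub_def using that P.lub_closed by simp
  fix b m1 m2 assume b: "complemented PC (\<subseteq>) b" and m: "m1 \<in> T1" "m2 \<in> T1" and b_le: "b \<subseteq> tr m1 m2"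
  have bP: "b \<in> PC" using b by (rule P.complemented_closed)
  have "(\<inter>) b ` (\<lambda>h. h m1) ` S = (\<inter>) b ` (\<lambda>h. h m2) ` S"
    unfolding image_image using S LB1_compat[OF _ b m b_le] by (intro image_cong) auto
  then show "b \<inter> pw_lub T1 PC (\<subseteq>) S m1 = b \<inter> pw_lub T1 PC (\<subseteq>) S m2"
    unfolding pw_lub_def using m Int_lub_PC[OF bP img] by simp
qed (simp add: pw_lub_def)

lemma LB1_pw_meet_closed:
  assumes h: "h \<in> LB1'" and h': "h' \<in> LB1'"
  shows "pw_meet T1 PC (\<subseteq>) h h' \<in> LB1'"
proof -
  have "pw_meet T1 PC (\<subseteq>) h h' = (\<lambda>m. if m \<in> T1 then h m \<inter> h' m else undefined)"
    unfolding pw_meet_def using LB1_values[OF h] LB1_values[OF h'] by (intro ext) (simp add: meet_PC)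
  moreover have "(\<lambda>m. if m \<in> T1 then h m \<inter> h' m else undefined) \<in> LB1'"
  proof (rule LB1_memI)
    fix b m1 m2 assume "complemented PC (\<subseteq>) b" "m1 \<in> T1" "m2 \<in> T1" "b \<subseteq> tr m1 m2"
    then have "b \<inter> h m1 = b \<inter> h m2" and "b \<inter> h' m1 = b \<inter> h' m2"
      using LB1_compat h h' by blast+
    then have "b \<inter> (h m1 \<inter> h' m1) = b \<inter> (h m2 \<inter> h' m2)"
      by (metis Int_assoc Int_left_commute)
    then show "b \<inter> (if m1 \<in> T1 then h m1 \<inter> h' m1 else undefined)
        = b \<inter> (if m2 \<in> T1 then h m2 \<inter> h' m2 else undefined)"
      using \<open>m1 \<in> T1\<close> \<open>m2 \<in> T1\<close> by simp
  qed (use LB1_values h h' Int_in_PC in auto)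
  ultimately show ?thesis by simp
qed

lemma LB1_pointwise: "pointwise_frame PC (\<subseteq>) T1 LB1'"
proof
  have "pw_top T1 PC (\<subseteq>) = sigma_inv M c0 FS"
    unfolding pw_top_def sigma_inv_def top_PC ..
  then show "pw_top T1 PC (\<subseteq>) \<in> LB1'" using sigma_inv_in_LB1[OF FS_in_PC] by simp
qed (fact LB1_values LB1_extensional LB1_pw_lub_closed LB1_pw_meet_closed)+

sublocale L1: pointwise_frame PC "(\<subseteq>)" T1 LB1'
  by (rule LB1_pointwise)

lemma LB1_le_eq: "LB1_le M c0 = pw_le T1 (\<subseteq>)"
  by (intro ext) (simp add: LB1_le_def pw_le_def)

abbreviation "le1 \<equiv> pw_le T1 (\<subseteq>)"

lemma lub_trace_to_top: "lub LB1' le1 (trace_to ` T1) = ftop LB1' le1"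
proof -
  have img: "trace_to ` T1 \<subseteq> LB1'" using trace_to_in_LB1 by blast
  have "pw_lub T1 PC (\<subseteq>) (trace_to ` T1) m = pw_top T1 PC (\<subseteq>) m" for m
  proof (cases "m \<in> T1")
    case True
    have sub: "(\<lambda>h. h m) ` trace_to ` T1 \<subseteq> PC" using True trace_in_PC unfolding trace_to_def by auto
    have "trace_to m m = FS" using True trace_refl unfolding trace_to_def by simp
    then have "FS \<in> (\<lambda>h. h m) ` trace_to ` T1" using True by blast
    then have "lub PC (\<subseteq>) ((\<lambda>h. h m) ` trace_to ` T1) = FS"
      using P.lub_upper[OF sub] P.lub_closed[OF sub] PC_subset_FS by blast
    then show ?thesis unfolding pw_lub_def pw_top_def top_PC using True by simp
  qed (simp add: pw_lub_def pw_top_def)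
  then show ?thesis unfolding L1.lub_eq_pw_lub[OF img] L1.top_eq_pw_top by (rule ext)
qed

lemma meet_trace_to_le:
  assumes m0: "m0 \<in> T1" and m1: "m1 \<in> T1"
  shows "le1 (meet2 LB1' le1 (trace_to m0) (trace_to m1)) (sigma_inv M c0 (tr m0 m1))"
  unfolding L1.meet_eq_pw_meet[OF trace_to_in_LB1[OF m0] trace_to_in_LB1[OF m1]]
  using trace_trans meet_PC[OF trace_in_PC trace_in_PC]
  by (simp add: pw_le_def pw_meet_def sigma_inv_def trace_to_def)

text \<open>A piece w m0 \<inter> [[m \<sim> m0]] lies below w m because the trace is a join of complemented
  opens, on each of which w m0 and w m agree.\<close>

lemma lub_LB1_trace_pieces:
  assumes w: "w \<in> LB1'" and m: "m \<in> T1"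
  shows "lub PC (\<subseteq>) ((\<lambda>m0. w m0 \<inter> tr m m0) ` T1) = w m"
proof (rule subset_antisym)
  have wm: "w m \<in> PC" using LB1_values[OF w m] .
  have sub: "(\<lambda>m0. w m0 \<inter> tr m m0) ` T1 \<subseteq> PC"
    using LB1_values[OF w] trace_in_PC Int_in_PC by auto
  have "w m0 \<inter> tr m m0 \<subseteq> w m" if m0: "m0 \<in> T1" for m0
  proof -
    have "meet2 PC (\<subseteq>) (w m0) (tr m m0) \<subseteq> w m"
    proof (rule P.meet_compl_generated_le[OF compl_generated_trace LB1_values[OF w m0] wm])
      fix b assume b: "complemented PC (\<subseteq>) b" "b \<subseteq> tr m m0"
      then have "b \<inter> w m = b \<inter> w m0" by (rule LB1_compat[OF w _ m m0])
      then show "meet2 PC (\<subseteq>) (w m0) b \<subseteq> w m"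
        using P.complemented_closed[OF b(1)] LB1_values[OF w m0] by (auto simp: meet_PC)
    qed
    then show ?thesis using LB1_values[OF w m0] trace_in_PC by (simp add: meet_PC)
  qed
  then show "lub PC (\<subseteq>) ((\<lambda>m0. w m0 \<inter> tr m m0) ` T1) \<subseteq> w m"
    using wm by (intro P.lub_least[OF sub]) auto
  have "w m = w m \<inter> tr m m" using trace_refl[OF m] wm PC_subset_FS by blast
  also have "\<dots> \<subseteq> lub PC (\<subseteq>) ((\<lambda>m0. w m0 \<inter> tr m m0) ` T1)"
    using m by (intro P.lub_upper[OF sub]) blast
  finally show "w m \<subseteq> lub PC (\<subseteq>) ((\<lambda>m0. w m0 \<inter> tr m m0) ` T1)" .
qed

lemma LB1_decomposition:
  assumes w: "w \<in> LB1'"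
  shows "lub LB1' le1 ((\<lambda>m0. meet2 LB1' le1 (sigma_inv M c0 (w m0)) (trace_to m0)) ` T1) = w"
proof -
  let ?piece = "\<lambda>m0. meet2 LB1' le1 (sigma_inv M c0 (w m0)) (trace_to m0)"
  have sig: "sigma_inv M c0 (w m0) \<in> LB1'" if "m0 \<in> T1" for m0
    using sigma_inv_in_LB1 LB1_values[OF w that] .
  have img: "?piece ` T1 \<subseteq> LB1'" using L1.F.meet_closed[OF sig trace_to_in_LB1] by blast
  have "?piece m0 m = w m0 \<inter> tr m m0" if "m \<in> T1" "m0 \<in> T1" for m m0
    unfolding L1.meet_eq_pw_meet[OF sig[OF that(2)] trace_to_in_LB1[OF that(2)]]
    using that LB1_values[OF w] trace_in_PC by (simp add: pw_meet_def sigma_inv_def trace_to_def meet_PC)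
  then have "pw_lub T1 PC (\<subseteq>) (?piece ` T1) m = w m" if "m \<in> T1" for m
    using that lub_LB1_trace_pieces[OF w that] unfolding pw_lub_def image_image by (simp cong: image_cong)
  then show ?thesis
    unfolding L1.lub_eq_pw_lub[OF img] by (intro L1.eqI L1.pw_lub_closed img w)
qed

end

section \<open>The pullback of f along the source map\<close>

locale pullback_data = ranked_monad M c0 c1 K + L: frame OL leL
  for M :: "('i, 't) set_monad" and c0 c1 :: 'i and K :: "'k set"
    and OL :: "'l set" and leL :: "'l \<Rightarrow> 'l \<Rightarrow> bool" +
  fixes finv :: "'t set set \<Rightarrow> 'l"
  assumes finv_hom: "frame_hom (LB0 M c0 c1) (\<subseteq>) OL leL finv"
begin

sublocale f: frame_morphism PC "(\<subseteq>)" OL leL finv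
  using finv_hom unfolding LB0_eq by unfold_locales

abbreviation "PB \<equiv> pb_carrier M c0 c1 K OL leL finv"
abbreviation "leP \<equiv> pw_le T1 leL"

lemma PB_values: "h \<in> PB \<Longrightarrow> m \<in> T1 \<Longrightarrow> h m \<in> OL"
  unfolding pb_carrier_def by blast

lemma PB_extensional: "h \<in> PB \<Longrightarrow> m \<notin> T1 \<Longrightarrow> h m = undefined"
  unfolding pb_carrier_def by blast

lemma PB_compat:
  "h \<in> PB \<Longrightarrow> complemented PC (\<subseteq>) b \<Longrightarrow> m1 \<in> T1 \<Longrightarrow> m2 \<in> T1 \<Longrightarrow> b \<subseteq> tr m1 m2 \<Longrightarrow>
    meet2 OL leL (h m1) (finv b) = meet2 OL leL (h m2) (finv b)"
  unfolding pb_carrier_def LB0_eq trace_equiv_def by blast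

lemma PB_memI:
  "(\<And>m. m \<in> T1 \<Longrightarrow> h m \<in> OL) \<Longrightarrow> (\<And>m. m \<notin> T1 \<Longrightarrow> h m = undefined) \<Longrightarrow>
   (\<And>m1 m2 b. m1 \<in> T1 \<Longrightarrow> m2 \<in> T1 \<Longrightarrow> complemented PC (\<subseteq>) b \<Longrightarrow> b \<subseteq> tr m1 m2 \<Longrightarrow>
      meet2 OL leL (h m1) (finv b) = meet2 OL leL (h m2) (finv b)) \<Longrightarrow> h \<in> PB"
  unfolding pb_carrier_def LB0_eq trace_equiv_def by blast

lemma PB_pw_lub_closed:
  assumes S: "S \<subseteq> PB"
  shows "pw_lub T1 OL leL S \<in> PB"
proof (rule PB_memI)
  have img: "(\<lambda>h. h m) ` S \<subseteq> OL" if "m \<in> T1" for m using S PB_values that by blast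
  then show "pw_lub T1 OL leL S m \<in> OL" if "m \<in> T1" for m
    unfolding pw_lub_def using that L.lub_closed by simp
  fix m1 m2 b assume m: "m1 \<in> T1" "m2 \<in> T1" and b: "complemented PC (\<subseteq>) b" "b \<subseteq> tr m1 m2"
  have fb: "finv b \<in> OL" using f.hom_closed P.complemented_closed[OF b(1)] .
  have "(\<lambda>s. meet2 OL leL s (finv b)) ` (\<lambda>h. h m1) ` S = (\<lambda>s. meet2 OL leL s (finv b)) ` (\<lambda>h. h m2) ` S"
    unfolding image_image using S PB_compat[OF _ b(1) m b(2)] by (intro image_cong) auto
  then show "meet2 OL leL (pw_lub T1 OL leL S m1) (finv b)
      = meet2 OL leL (pw_lub T1 OL leL S m2) (finv b)"
    unfolding pw_lub_def using m L.lub_meet_distrib[OF fb img] by simp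
qed (simp add: pw_lub_def)

lemma PB_pw_meet_closed:
  assumes h: "h \<in> PB" and h': "h' \<in> PB"
  shows "pw_meet T1 OL leL h h' \<in> PB"
proof (rule PB_memI)
  show "pw_meet T1 OL leL h h' m \<in> OL" if "m \<in> T1" for m
    unfolding pw_meet_def using that PB_values[OF h] PB_values[OF h'] L.meet_closed by simp
  fix m1 m2 b assume m: "m1 \<in> T1" "m2 \<in> T1" and b: "complemented PC (\<subseteq>) b" "b \<subseteq> tr m1 m2"
  have fb: "finv b \<in> OL" using f.hom_closed P.complemented_closed[OF b(1)] .
  have "meet2 OL leL (pw_meet T1 OL leL h h' m) (finv b) =
      meet2 OL leL (meet2 OL leL (h m) (finv b)) (meet2 OL leL (h' m) (finv b))" if "m \<in> T1" for m
    unfolding pw_meet_def using that L.meet_right_distrib[OF PB_values[OF h] PB_values[OF h'] fb] by simp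
  then show "meet2 OL leL (pw_meet T1 OL leL h h' m1) (finv b)
      = meet2 OL leL (pw_meet T1 OL leL h h' m2) (finv b)"
    using m PB_compat[OF h b(1) m b(2)] PB_compat[OF h' b(1) m b(2)] by simp
qed (simp add: pw_meet_def)

lemma PB_pointwise: "pointwise_frame OL leL T1 PB"
proof
  show "pw_top T1 OL leL \<in> PB"
    by (rule PB_memI) (auto simp: pw_top_def intro: L.top_closed)
qed (fact PB_values PB_extensional PB_pw_lub_closed PB_pw_meet_closed)+

sublocale Pb: pointwise_frame OL leL T1 PB
  by (rule PB_pointwise)

lemma pb_le_eq: "pb_le M c0 leL = leP"
  by (intro ext) (simp add: pb_le_def pw_le_def)

text \<open>The compatibility condition of PB only speaks about complemented opens; it extends to
  the trace because the trace is their join.\<close>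

lemma PB_trace_bound:
  assumes h: "h \<in> PB" and m0: "m0 \<in> T1" and m1: "m1 \<in> T1"
  shows "leL (meet2 OL leL (h m1) (finv (tr m0 m1))) (h m0)"
proof -
  let ?B = "{b. complemented PC (\<subseteq>) b \<and> b \<subseteq> tr m0 m1}"
  have hm1: "h m1 \<in> OL" and hm0: "h m0 \<in> OL" using PB_values h m0 m1 by auto
  have fB: "finv ` ?B \<subseteq> OL" using f.hom_closed P.complemented_below_subset by blast
  have "tr m0 m1 = lub PC (\<subseteq>) ?B"
    using compl_generated_trace unfolding compl_generated_def by blast
  then have "finv (tr m0 m1) = finv (lub PC (\<subseteq>) ?B)" by (rule arg_cong)
  also have "\<dots> = lub OL leL (finv ` ?B)" by (rule f.hom_lub[OF P.complemented_below_subset])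
  finally have "meet2 OL leL (h m1) (finv (tr m0 m1)) = meet2 OL leL (h m1) (lub OL leL (finv ` ?B))"
    by simp
  also have "\<dots> = lub OL leL ((\<lambda>s. meet2 OL leL (h m1) s) ` finv ` ?B)"
    by (rule L.meet_lub_distrib[OF hm1 fB])
  also have "leL \<dots> (h m0)"
  proof (rule L.lub_least)
    fix s assume "s \<in> (\<lambda>s. meet2 OL leL (h m1) s) ` finv ` ?B"
    then obtain b where b: "complemented PC (\<subseteq>) b" "b \<subseteq> tr m0 m1"
      and s: "s = meet2 OL leL (h m1) (finv b)" by blast
    have "s = meet2 OL leL (h m0) (finv b)" unfolding s using PB_compat[OF h b(1) m0 m1 b(2)] by simp
    then show "leL s (h m0)"
      using L.meet_lower1[OF hm0 f.hom_closed[OF P.complemented_closed[OF b(1)]]] by simp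
  qed (use hm0 hm1 fB L.meet_closed in blast)+
  finally show ?thesis .
qed

lemma pb_inl_in: "x \<in> OL \<Longrightarrow> pb_inl M c0 x \<in> PB"
  by (rule PB_memI) (auto simp: pb_inl_def)

lemma pb_inr_in:
  assumes w: "w \<in> LB1'"
  shows "pb_inr M c0 finv w \<in> PB"
proof (rule PB_memI)
  fix m1 m2 b assume m: "m1 \<in> T1" "m2 \<in> T1" and b: "complemented PC (\<subseteq>) b" "b \<subseteq> tr m1 m2"
  have bP: "b \<in> PC" using P.complemented_closed[OF b(1)] .
  have "meet2 OL leL (finv (w m)) (finv b) = finv (w m \<inter> b)" if "m \<in> T1" for m
    using f.hom_meet[OF LB1_values[OF w that] bP] meet_PC[OF LB1_values[OF w that] bP] by simp
  moreover have "w m1 \<inter> b = w m2 \<inter> b" using LB1_compat[OF w b(1) m b(2)] by blast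
  ultimately show "meet2 OL leL (pb_inr M c0 finv w m1) (finv b)
      = meet2 OL leL (pb_inr M c0 finv w m2) (finv b)"
    unfolding pb_inr_def using m by simp
qed (auto simp: pb_inr_def intro: f.hom_closed LB1_values[OF w])

lemma frame_hom_pb_inl: "frame_hom OL leL PB leP (pb_inl M c0)"
  unfolding frame_hom_def
proof (intro conjI ballI allI impI)
  show "pb_inl M c0 (ftop OL leL) = ftop PB leP"
    unfolding Pb.top_eq_pw_top pb_inl_def pw_top_def ..
  fix a b assume a: "a \<in> OL" and b: "b \<in> OL"
  show "pb_inl M c0 (meet2 OL leL a b) = meet2 PB leP (pb_inl M c0 a) (pb_inl M c0 b)"
    unfolding Pb.meet_eq_pw_meet[OF pb_inl_in[OF a] pb_inl_in[OF b]]
    by (auto simp: pb_inl_def pw_meet_def)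
next
  fix S assume S: "S \<subseteq> OL"
  have "(\<lambda>h. h m) ` pb_inl M c0 ` S = S" if "m \<in> T1" for m
    unfolding image_image pb_inl_def using that by simp
  then have "pb_inl M c0 (lub OL leL S) = pw_lub T1 OL leL (pb_inl M c0 ` S)"
    unfolding pw_lub_def pb_inl_def by auto
  moreover have "pb_inl M c0 ` S \<subseteq> PB" using S pb_inl_in by blast
  ultimately show "pb_inl M c0 (lub OL leL S) = lub PB leP (pb_inl M c0 ` S)"
    by (simp add: Pb.lub_eq_pw_lub)
qed (rule pb_inl_in)

lemma frame_hom_pb_inr: "frame_hom LB1' le1 PB leP (pb_inr M c0 finv)"
  unfolding frame_hom_def
proof (intro conjI ballI allI impI)
  show "pb_inr M c0 finv (ftop LB1' le1) = ftop PB leP"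
    unfolding Pb.top_eq_pw_top L1.top_eq_pw_top pb_inr_def pw_top_def using f.hom_top top_PC by auto
  fix a b assume a: "a \<in> LB1'" and b: "b \<in> LB1'"
  show "pb_inr M c0 finv (meet2 LB1' le1 a b) = meet2 PB leP (pb_inr M c0 finv a) (pb_inr M c0 finv b)"
    unfolding Pb.meet_eq_pw_meet[OF pb_inr_in[OF a] pb_inr_in[OF b]] L1.meet_eq_pw_meet[OF a b]
    by (auto simp: pb_inr_def pw_meet_def f.hom_meet LB1_values[OF a] LB1_values[OF b])
next
  fix S assume S: "S \<subseteq> LB1'"
  have "finv (lub PC (\<subseteq>) ((\<lambda>h. h m) ` S)) = lub OL leL ((\<lambda>h. h m) ` pb_inr M c0 finv ` S)"
    if "m \<in> T1" for m
    using f.hom_lub[of "(\<lambda>h. h m) ` S"] S LB1_values that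
    by (auto simp: image_image pb_inr_def cong: image_cong)
  then have "pb_inr M c0 finv (pw_lub T1 PC (\<subseteq>) S) = pw_lub T1 OL leL (pb_inr M c0 finv ` S)"
    unfolding pw_lub_def pb_inr_def by auto
  moreover have "pb_inr M c0 finv ` S \<subseteq> PB" using S pb_inr_in by blast
  ultimately show "pb_inr M c0 finv (lub LB1' le1 S) = lub PB leP (pb_inr M c0 finv ` S)"
    using S by (simp add: Pb.lub_eq_pw_lub L1.lub_eq_pw_lub)
qed (rule pb_inr_in)

lemma pb_inl_finv: "pb_inl M c0 (finv x) = pb_inr M c0 finv (sigma_inv M c0 x)"
  unfolding pb_inl_def pb_inr_def sigma_inv_def by auto

lemma pb_cocone:
  "frame_cocone PC (\<subseteq>) OL leL LB1' le1 finv (sigma_inv M c0) PB leP (pb_inl M c0) (pb_inr M c0 finv)"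
  unfolding frame_cocone_def using Pb.is_frame_pw frame_hom_pb_inl frame_hom_pb_inr pb_inl_finv by blast

lemma lub_PB_trace_pieces:
  assumes h: "h \<in> PB" and m: "m \<in> T1"
  shows "lub OL leL ((\<lambda>m0. meet2 OL leL (h m0) (finv (tr m m0))) ` T1) = h m"
proof -
  let ?pieces = "(\<lambda>m0. meet2 OL leL (h m0) (finv (tr m m0))) ` T1"
  have hm: "h m \<in> OL" using PB_values[OF h m] .
  have sub: "?pieces \<subseteq> OL"
    using PB_values[OF h] f.hom_closed[OF trace_in_PC] L.meet_closed by blast
  show ?thesis
  proof (rule L.antisym[OF L.lub_closed[OF sub] hm])
    show "leL (lub OL leL ?pieces) (h m)"
      using PB_trace_bound[OF h m] hm by (intro L.lub_least[OF sub]) auto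
    have "h m = meet2 OL leL (h m) (finv (tr m m))"
      using trace_refl[OF m] f.hom_top top_PC L.meet_top[OF hm] by simp
    also have "leL \<dots> (lub OL leL ?pieces)"
      using m by (intro L.lub_upper[OF sub]) blast
    finally show "leL (h m) (lub OL leL ?pieces)" .
  qed
qed

lemma PB_decomposition:
  assumes h: "h \<in> PB"
  shows "lub PB leP ((\<lambda>m0. meet2 PB leP (pb_inl M c0 (h m0)) (pb_inr M c0 finv (trace_to m0))) ` T1) = h"
proof -
  let ?piece = "\<lambda>m0. meet2 PB leP (pb_inl M c0 (h m0)) (pb_inr M c0 finv (trace_to m0))"
  have inl: "pb_inl M c0 (h m0) \<in> PB" and inr: "pb_inr M c0 finv (trace_to m0) \<in> PB"
    if "m0 \<in> T1" for m0
    using pb_inl_in PB_values[OF h that] pb_inr_in trace_to_in_LB1[OF that] by auto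
  have img: "?piece ` T1 \<subseteq> PB" using Pb.F.meet_closed[OF inl inr] by blast
  have "?piece m0 m = meet2 OL leL (h m0) (finv (tr m m0))" if "m \<in> T1" "m0 \<in> T1" for m m0
    unfolding Pb.meet_eq_pw_meet[OF inl[OF that(2)] inr[OF that(2)]]
    using that by (simp add: pw_meet_def pb_inl_def pb_inr_def trace_to_def)
  then have "pw_lub T1 OL leL (?piece ` T1) m = h m" if "m \<in> T1" for m
    using that lub_PB_trace_pieces[OF h that] unfolding pw_lub_def image_image by (simp cong: image_cong)
  then show ?thesis
    unfolding Pb.lub_eq_pw_lub[OF img] by (intro Pb.eqI Pb.pw_lub_closed img h)
qed

end

section \<open>The universal property\<close>

locale pullback_cocone = pullback_data M c0 c1 K OL leL finv
  for M :: "('i, 't) set_monad" and c0 c1 :: 'i and K :: "'k set"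
    and OL :: "'l set" and leL :: "'l \<Rightarrow> 'l \<Rightarrow> bool" and finv :: "'t set set \<Rightarrow> 'l" +
  fixes Q :: "'q set" and leQ :: "'q \<Rightarrow> 'q \<Rightarrow> bool"
    and p :: "'l \<Rightarrow> 'q" and q :: "('t \<Rightarrow> 't set set) \<Rightarrow> 'q"
  assumes cocone: "frame_cocone PC (\<subseteq>) OL leL LB1' le1 finv (sigma_inv M c0) Q leQ p q"
begin

sublocale Q: frame Q leQ
  using cocone unfolding frame_cocone_def by unfold_locales blast

sublocale p: frame_morphism OL leL Q leQ p
  using cocone unfolding frame_cocone_def by unfold_locales blast

sublocale q: frame_morphism LB1' le1 Q leQ q
  using cocone unfolding frame_cocone_def by unfold_locales blast

lemma p_finv: "x \<in> PC \<Longrightarrow> p (finv x) = q (sigma_inv M c0 x)"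
  using cocone unfolding frame_cocone_def by blast

definition piece :: "('t \<Rightarrow> 'l) \<Rightarrow> 't \<Rightarrow> 'q" where
  "piece h m0 = meet2 Q leQ (p (h m0)) (q (trace_to m0))"

definition mediator :: "('t \<Rightarrow> 'l) \<Rightarrow> 'q" where
  "mediator h = lub Q leQ (piece h ` T1)"

lemma q_trace_to_in: "m0 \<in> T1 \<Longrightarrow> q (trace_to m0) \<in> Q"
  using q.hom_closed trace_to_in_LB1 by blast

lemma p_PB_in: "h \<in> PB \<Longrightarrow> m0 \<in> T1 \<Longrightarrow> p (h m0) \<in> Q"
  using p.hom_closed PB_values by blast

lemma piece_in: "h \<in> PB \<Longrightarrow> m0 \<in> T1 \<Longrightarrow> piece h m0 \<in> Q"
  unfolding piece_def using p_PB_in q_trace_to_in Q.meet_closed by blast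

lemma pieces_subset: "h \<in> PB \<Longrightarrow> piece h ` T1 \<subseteq> Q"
  using piece_in by blast

lemma mediator_in: "h \<in> PB \<Longrightarrow> mediator h \<in> Q"
  unfolding mediator_def by (rule Q.lub_closed[OF pieces_subset])

lemma piece_le_mediator: "h \<in> PB \<Longrightarrow> m0 \<in> T1 \<Longrightarrow> leQ (piece h m0) (mediator h)"
  unfolding mediator_def by (intro Q.lub_upper[OF pieces_subset]) blast+

lemma mediator_unique:
  assumes r: "frame_hom PB leP Q leQ r" and r_inl: "\<forall>y\<in>OL. r (pb_inl M c0 y) = p y"
    and r_inr: "\<forall>z\<in>LB1'. r (pb_inr M c0 finv z) = q z" and h: "h \<in> PB"
  shows "r h = mediator h"
proof -
  interpret r: frame_morphism PB leP Q leQ r by unfold_locales (rule r)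
  let ?piece = "\<lambda>m0. meet2 PB leP (pb_inl M c0 (h m0)) (pb_inr M c0 finv (trace_to m0))"
  have inl: "pb_inl M c0 (h m0) \<in> PB" and inr: "pb_inr M c0 finv (trace_to m0) \<in> PB"
    if "m0 \<in> T1" for m0
    using pb_inl_in PB_values[OF h that] pb_inr_in trace_to_in_LB1[OF that] by auto
  have "r (?piece m0) = piece h m0" if "m0 \<in> T1" for m0
    using r.hom_meet[OF inl inr] r_inl r_inr PB_values[OF h] trace_to_in_LB1 that
    unfolding piece_def by simp
  moreover have "?piece ` T1 \<subseteq> PB" using Pb.F.meet_closed[OF inl inr] by blast
  ultimately have "r (lub PB leP (?piece ` T1)) = mediator h"
    unfolding mediator_def by (simp add: r.hom_lub image_image cong: image_cong)
  then show ?thesis using PB_decomposition[OF h] by simp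
qed

lemma mediator_pb_inl:
  assumes y: "y \<in> OL"
  shows "mediator (pb_inl M c0 y) = p y"
proof -
  have py: "p y \<in> Q" using p.hom_closed y .
  have q_img: "q ` trace_to ` T1 \<subseteq> Q" using q_trace_to_in by blast
  have "mediator (pb_inl M c0 y) = lub Q leQ ((\<lambda>s. meet2 Q leQ (p y) s) ` q ` trace_to ` T1)"
    unfolding mediator_def piece_def image_image pb_inl_def
    by (intro arg_cong[where f="lub Q leQ"] image_cong) auto
  also have "\<dots> = meet2 Q leQ (p y) (q (lub LB1' le1 (trace_to ` T1)))"
    using Q.meet_lub_distrib[OF py q_img] q.hom_lub trace_to_in_LB1 by (auto simp: image_subset_iff)
  also have "\<dots> = p y" unfolding lub_trace_to_top q.hom_top using Q.meet_top[OF py] .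
  finally show ?thesis .
qed

lemma mediator_pb_inr:
  assumes w: "w \<in> LB1'"
  shows "mediator (pb_inr M c0 finv w) = q w"
proof -
  let ?piece = "\<lambda>m0. meet2 LB1' le1 (sigma_inv M c0 (w m0)) (trace_to m0)"
  have sig: "sigma_inv M c0 (w m0) \<in> LB1'" if "m0 \<in> T1" for m0
    using sigma_inv_in_LB1 LB1_values[OF w that] .
  have sub: "?piece ` T1 \<subseteq> LB1'" using L1.F.meet_closed[OF sig trace_to_in_LB1] by blast
  have "piece (pb_inr M c0 finv w) m0 = q (?piece m0)" if m0: "m0 \<in> T1" for m0
    using m0 p_finv[OF LB1_values[OF w m0]] q.hom_meet[OF sig[OF m0] trace_to_in_LB1[OF m0]]
    unfolding piece_def pb_inr_def by simp
  then have "mediator (pb_inr M c0 finv w) = lub Q leQ (q ` ?piece ` T1)"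
    unfolding mediator_def image_image by (simp cong: image_cong)
  also have "\<dots> = q w" using q.hom_lub[OF sub] LB1_decomposition[OF w] by simp
  finally show ?thesis .
qed

lemma mediator_top: "mediator (ftop PB leP) = ftop Q leQ"
proof -
  have "ftop PB leP = pb_inl M c0 (ftop OL leL)"
    unfolding Pb.top_eq_pw_top pw_top_def pb_inl_def ..
  then show ?thesis using mediator_pb_inl[OF L.top_closed] p.hom_top by simp
qed

lemma mediator_mono:
  assumes h: "h \<in> PB" and h': "h' \<in> PB" and le: "leP h h'"
  shows "leQ (mediator h) (mediator h')"
  unfolding mediator_def
proof (rule Q.lub_least[OF pieces_subset[OF h] mediator_in[OF h', unfolded mediator_def]])
  fix s assume "s \<in> piece h ` T1"
  then obtain m0 where m0: "m0 \<in> T1" and s: "s = piece h m0" by blast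
  have "leQ (p (h m0)) (p (h' m0))"
    using le m0 p.hom_mono PB_values h h' unfolding pw_le_def by blast
  then have "leQ s (piece h' m0)"
    unfolding s piece_def
    using Q.meet_mono[OF p_PB_in[OF h m0] q_trace_to_in[OF m0] p_PB_in[OF h' m0] q_trace_to_in[OF m0]]
      Q.refl[OF q_trace_to_in[OF m0]] by blast
  then show "leQ s (lub Q leQ (piece h' ` T1))"
    using Q.trans[OF piece_in[OF h m0] piece_in[OF h' m0] mediator_in[OF h']] piece_le_mediator[OF h' m0]
    unfolding s mediator_def by blast
qed

text \<open>The meet of two pieces at m0 and m1 lies below the trace [[m0 \<sim> m1]] (via the cocone
  square), and there the compatibility of h' moves its value from m1 to m0.\<close>

lemma q_trace_to_meet_le:
  assumes m0: "m0 \<in> T1" and m1: "m1 \<in> T1"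
  shows "leQ (meet2 Q leQ (q (trace_to m0)) (q (trace_to m1))) (p (finv (tr m0 m1)))"
proof -
  have "meet2 Q leQ (q (trace_to m0)) (q (trace_to m1)) = q (meet2 LB1' le1 (trace_to m0) (trace_to m1))"
    using q.hom_meet[OF trace_to_in_LB1[OF m0] trace_to_in_LB1[OF m1]] by simp
  also have "leQ \<dots> (q (sigma_inv M c0 (tr m0 m1)))"
    by (intro q.hom_mono L1.F.meet_closed trace_to_in_LB1 sigma_inv_in_LB1 trace_in_PC
        meet_trace_to_le m0 m1)
  finally show ?thesis using p_finv[OF trace_in_PC] by simp
qed

lemma piece_meet_le:
  assumes h: "h \<in> PB" and h': "h' \<in> PB" and m0: "m0 \<in> T1" and m1: "m1 \<in> T1"
  shows "leQ (meet2 Q leQ (piece h m0) (piece h' m1)) (piece (meet2 PB leP h h') m0)"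
proof -
  let ?x = "meet2 Q leQ (piece h m0) (piece h' m1)"
  let ?t = "finv (tr m0 m1)"
  have x: "?x \<in> Q" using piece_in h h' m0 m1 Q.meet_closed by blast
  have ft: "?t \<in> OL" using f.hom_closed[OF trace_in_PC] .
  have hm: "h m0 \<in> OL" "h' m0 \<in> OL" "h' m1 \<in> OL" using PB_values h h' m0 m1 by auto
  have inQ: "p (h m0) \<in> Q" "p (h' m0) \<in> Q" "p (h' m1) \<in> Q" "p ?t \<in> Q"
    "q (trace_to m0) \<in> Q" "q (trace_to m1) \<in> Q"
    using p.hom_closed hm ft q_trace_to_in m0 m1 by auto
  have below: "leQ ?x (p (h m0))" "leQ ?x (q (trace_to m0))"
    "leQ ?x (p (h' m1))" "leQ ?x (q (trace_to m1))"
    using piece_in[OF h m0] piece_in[OF h' m1] inQ x unfolding piece_def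
    by (meson Q.meet_closed Q.meet_lower1 Q.meet_lower2 Q.trans)+
  have "leQ ?x (p ?t)"
    using Q.trans[OF x Q.meet_closed[OF inQ(5,6)] inQ(4) Q.meet_greatest[OF inQ(5,6) x below(2,4)]
        q_trace_to_meet_le[OF m0 m1]] .
  then have "leQ ?x (p (meet2 OL leL (h' m1) ?t))"
    using Q.meet_greatest[OF inQ(3,4) x below(3)] p.hom_meet[OF hm(3) ft] by simp
  then have "leQ ?x (p (h' m0))"
    using Q.trans[OF x p.hom_closed[OF L.meet_closed[OF hm(3) ft]] inQ(2)]
      p.hom_mono[OF L.meet_closed[OF hm(3) ft] hm(2) PB_trace_bound[OF h' m0 m1]] by blast
  then have "leQ ?x (p (meet2 OL leL (h m0) (h' m0)))"
    using Q.meet_greatest[OF inQ(1,2) x below(1)] p.hom_meet[OF hm(1,2)] by simp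
  moreover have "meet2 PB leP h h' m0 = meet2 OL leL (h m0) (h' m0)"
    unfolding Pb.meet_eq_pw_meet[OF h h'] pw_meet_def using m0 by simp
  ultimately show ?thesis
    unfolding piece_def[of "meet2 PB leP h h'" m0]
    using below(2) x inQ(5) p.hom_closed[OF L.meet_closed[OF hm(1,2)]] by (intro Q.meet_greatest) simp_all
qed

lemma mediator_meet:
  assumes h: "h \<in> PB" and h': "h' \<in> PB"
  shows "mediator (meet2 PB leP h h') = meet2 Q leQ (mediator h) (mediator h')"
proof (rule Q.antisym)
  have hh: "meet2 PB leP h h' \<in> PB" using Pb.F.meet_closed[OF h h'] .
  show "leQ (mediator (meet2 PB leP h h')) (meet2 Q leQ (mediator h) (mediator h'))"
    using mediator_mono[OF hh h Pb.F.meet_lower1[OF h h']] mediator_mono[OF hh h' Pb.F.meet_lower2[OF h h']]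
    by (intro Q.meet_greatest mediator_in h h' hh)
  show "leQ (meet2 Q leQ (mediator h) (mediator h')) (mediator (meet2 PB leP h h'))"
    unfolding mediator_def
  proof (rule Q.meet_lub_lub_le[OF pieces_subset[OF h] pieces_subset[OF h']
        Q.lub_closed[OF pieces_subset[OF hh]]])
    fix s s' assume "s \<in> piece h ` T1" and "s' \<in> piece h' ` T1"
    then obtain m0 m1 where m: "m0 \<in> T1" "m1 \<in> T1" and s: "s = piece h m0" "s' = piece h' m1" by blast
    show "leQ (meet2 Q leQ s s') (lub Q leQ (piece (meet2 PB leP h h') ` T1))"
      using Q.trans[OF Q.meet_closed[OF piece_in[OF h m(1)] piece_in[OF h' m(2)]] piece_in[OF hh m(1)]
          mediator_in[OF hh] piece_meet_le[OF h h' m] piece_le_mediator[OF hh m(1)]]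
      unfolding s mediator_def .
  qed
qed (use h h' Pb.F.meet_closed in \<open>auto intro: mediator_in Q.meet_closed\<close>)

lemma mediator_lub:
  assumes S: "S \<subseteq> PB"
  shows "mediator (lub PB leP S) = lub Q leQ (mediator ` S)"
proof -
  have pieces: "piece h m0 \<in> Q" if "h \<in> S" "m0 \<in> T1" for h m0 using S that piece_in by blast
  have "piece (lub PB leP S) m0 = lub Q leQ ((\<lambda>h. piece h m0) ` S)" if m0: "m0 \<in> T1" for m0
  proof -
    have imS: "(\<lambda>h. h m0) ` S \<subseteq> OL" using S PB_values m0 by blast
    have "p (lub PB leP S m0) = lub Q leQ (p ` (\<lambda>h. h m0) ` S)"
      unfolding Pb.lub_eq_pw_lub[OF S] pw_lub_def using m0 p.hom_lub[OF imS] by simp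
    then show ?thesis
      unfolding piece_def using Q.lub_meet_distrib[OF q_trace_to_in[OF m0]] p.hom_closed imS
      by (simp add: image_image image_subset_iff)
  qed
  then have "mediator (lub PB leP S) = lub Q leQ ((\<lambda>m0. lub Q leQ ((\<lambda>h. piece h m0) ` S)) ` T1)"
    unfolding mediator_def by (simp cong: image_cong)
  also have "\<dots> = lub Q leQ (\<Union>m0\<in>T1. (\<lambda>h. piece h m0) ` S)"
    using pieces by (intro Q.lub_UN) blast
  also have "(\<Union>m0\<in>T1. (\<lambda>h. piece h m0) ` S) = (\<Union>h\<in>S. piece h ` T1)" by blast
  also have "lub Q leQ \<dots> = lub Q leQ (mediator ` S)"
    unfolding mediator_def using pieces by (intro Q.lub_UN[symmetric]) blast
  finally show ?thesis .
qed

lemma frame_hom_mediator: "frame_hom PB leP Q leQ mediator"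
  unfolding frame_hom_def using mediator_in mediator_top mediator_meet mediator_lub by blast

lemma pb_mediates: "frame_mediates OL LB1' PB leP (pb_inl M c0) (pb_inr M c0 finv) Q leQ p q"
  unfolding frame_mediates_def
  using frame_hom_mediator mediator_pb_inl mediator_pb_inr mediator_unique by metis

end

theorem lemma3p14:
  fixes M :: "('i, 't) set_monad" and c0 c1 :: 'i and K :: "'k set"
    and OL :: "'l set" and leL :: "'l \<Rightarrow> 'l \<Rightarrow> bool"
    and finv :: "'t set set \<Rightarrow> 'l"
  assumes monad: "is_set_monad M"
    and rank: "ranked M K"
    and universe: "(card_of K, card_of (UNIV :: 'i set)) \<in> ordLeq"
    and two: "c0 \<noteq> c1"
    and locale_L: "is_frame OL leL"
    and f: "frame_hom (LB0 M c0 c1) (\<subseteq>) OL leL finv"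
  shows "frame_cocone (LB0 M c0 c1) (\<subseteq>) OL leL (LB1 M c0 c1 K) (LB1_le M c0) finv (sigma_inv M c0)
           (pb_carrier M c0 c1 K OL leL finv) (pb_le M c0 leL) (pb_inl M c0) (pb_inr M c0 finv)
       \<and> (\<forall>(Q :: 'q set) leQ p q.
            frame_cocone (LB0 M c0 c1) (\<subseteq>) OL leL (LB1 M c0 c1 K) (LB1_le M c0) finv (sigma_inv M c0)
              Q leQ p q \<longrightarrow>
            frame_mediates OL (LB1 M c0 c1 K) (pb_carrier M c0 c1 K OL leL finv) (pb_le M c0 leL)
              (pb_inl M c0) (pb_inr M c0 finv) Q leQ p q)"
proof -
  interpret pullback_data M c0 c1 K OL leL finv
    using monad rank locale_L f by unfold_locales
  show ?thesis
    unfolding LB1_le_eq pb_le_eq LB0_eq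
  proof (intro conjI allI impI)
    show "frame_cocone PC (\<subseteq>) OL leL LB1' le1 finv (sigma_inv M c0) PB leP (pb_inl M c0) (pb_inr M c0 finv)"
      by (rule pb_cocone)
    fix Q :: "'q set" and leQ p q
    assume "frame_cocone PC (\<subseteq>) OL leL LB1' le1 finv (sigma_inv M c0) Q leQ p q"
    then interpret pullback_cocone M c0 c1 K OL leL finv Q leQ p q
      by unfold_locales
    show "frame_mediates OL LB1' PB leP (pb_inl M c0) (pb_inr M c0 finv) Q leQ p q"
      by (rule pb_mediates)
  qed
qed

end
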